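(* Let $2<p<\infty$ and let $w=(w_n)$ be a sequence of positive reals with $w_n\to0$ and $\sum_{n}w_n^{2p/(p-2)}=\infty$. Then the unit vector basis $(e_n)$ of $X_{p,w}$ has the factorization property: whenever $T\colon X_{p,w}\to X_{p,w}$ is a bounded linear operator with $\inf_n|e_n^*(Te_n)|>0$, there exist bounded linear operators $A,B\colon X_{p,w}\to X_{p,w}$ with $ATB=I$, the identity on $X_{p,w}$.
   Context: $X_{p,w}$ is the space of real sequences $(x_n)$ with $(x_n)\in\ell_p$ and $(x_nw_n)\in\ell_2$, normed by $\|(x_n)\|=\max\{\|(x_n)\|_{\ell_p},\|(x_nw_n)\|_{\ell_2}\}$; the unit vectors $(e_n)$ form an unconditional shrinking basis, and $(e_n^* )$ are the coordinate functionals. *)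

theory Defs
  imports "HOL-Analysis.Analysis"
begin

definition Xpw :: "real \<Rightarrow> (nat \<Rightarrow> real) \<Rightarrow> (nat \<Rightarrow> real) set" where
  "Xpw p w = {x. summable (\<lambda>n. \<bar>x n\<bar> powr p) \<and> summable (\<lambda>n. (x n * w n)\<^sup>2)}"

definition lp_norm :: "real \<Rightarrow> (nat \<Rightarrow> real) \<Rightarrow> real" where
  "lp_norm p x = (\<Sum>n. \<bar>x n\<bar> powr p) powr (1 / p)"

definition wl2_norm :: "(nat \<Rightarrow> real) \<Rightarrow> (nat \<Rightarrow> real) \<Rightarrow> real" where
  "wl2_norm w x = sqrt (\<Sum>n. (x n * w n)\<^sup>2)"

definition Xpw_norm :: "real \<Rightarrow> (nat \<Rightarrow> real) \<Rightarrow> (nat \<Rightarrow> real) \<Rightarrow> real" where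
  "Xpw_norm p w x = max (lp_norm p x) (wl2_norm w x)"

text \<open>Unit vectors e_n; the coordinate functional e_n^* is evaluation at n.\<close>
definition unit_vec :: "nat \<Rightarrow> nat \<Rightarrow> real" where
  "unit_vec n = (\<lambda>k. if k = n then 1 else 0)"

text \<open>Bounded linear operators X_{p,w} -> X_{p,w} (only their values on X_{p,w} matter).\<close>
definition bounded_op_Xpw :: "real \<Rightarrow> (nat \<Rightarrow> real) \<Rightarrow> ((nat \<Rightarrow> real) \<Rightarrow> (nat \<Rightarrow> real)) \<Rightarrow> bool" where
  "bounded_op_Xpw p w T \<longleftrightarrow>
     (\<forall>x\<in>Xpw p w. T x \<in> Xpw p w) \<and>
     (\<forall>x\<in>Xpw p w. \<forall>y\<in>Xpw p w. T (\<lambda>k. x k + y k) = (\<lambda>k. T x k + T y k)) \<and>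
     (\<forall>x\<in>Xpw p w. \<forall>c::real. T (\<lambda>k. c * x k) = (\<lambda>k. c * T x k)) \<and>
     (\<exists>C. \<forall>x\<in>Xpw p w. Xpw_norm p w (T x) \<le> C * Xpw_norm p w x)"

end

theory Submission
  imports Defs
begin

text \<open>
  Write \<open>u\<^sub>n = w\<^sub>n\<^bsup>2p/(p-2)\<^esup>\<close>; divergence of \<open>\<Sum> u\<^sub>n\<close> lets us cut \<open>\<nat>\<close>, beyond any given
  point, into consecutive finite blocks of \<open>u\<close>-mass comparable to \<open>u\<^sub>k\<close>. On such a block the
  normalised vector \<open>b\<^sub>k = \<Sum> \<epsilon>\<^sub>i (u\<^sub>i/U)\<^bsup>1/p\<^esup> e\<^sub>i\<close> (\<open>U\<close> the mass of the block) has \<open>\<ell>\<^sub>p\<close>-norm one and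
  weighted \<open>\<ell>\<^sub>2\<close>-norm comparable to \<open>w\<^sub>k\<close>, so \<open>(b\<^sub>k)\<close> is equivalent to \<open>(e\<^sub>k)\<close>; a matching
  norm-one functional \<open>b\<^sub>k\<^sup>*\<close> on the block is obtained from Jensen's inequality. The signs \<open>\<epsilon>\<^sub>i\<close>
  are chosen greedily so that \<open>b\<^sub>k\<^sup>*(T b\<^sub>k)\<close> is at least a weighted average of the diagonal of \<open>T\<close>,
  hence at least \<open>\<delta> = inf |e\<^sub>n\<^sup>*(T e\<^sub>n)|\<close>. Any fixed functional is small on blocks far out, and
  (since \<open>w\<^sub>n \<rightarrow> 0\<close>) sign sums of \<open>m\<close> disjoint blocks have norm \<open>O(\<surd>m)\<close>, which forces a bounded
  functional to be small on all but finitely many of them. Choosing the blocks one after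
  another therefore makes the off-diagonal entries \<open>b\<^sub>k\<^sup>*(T b\<^sub>j)\<close> summably small, so that with
  \<open>B e\<^sub>k = b\<^sub>k\<close> and \<open>A y = (b\<^sub>k\<^sup>* y / b\<^sub>k\<^sup>*(T b\<^sub>k))\<^sub>k\<close> the operator \<open>ATB\<close> is a small perturbation of the
  identity, which is inverted by a Neumann series.
\<close>

lemma convex_on_powr_nonneg:
  assumes q: "q \<ge> 1"
  shows "convex_on {0..} (\<lambda>x::real. x powr q)"
proof (rule convex_onI)
  fix t x y :: real
  assume t: "0 < t" "t < 1" and xy: "x \<in> {0..}" "y \<in> {0..}"
  have below_id: "s powr q \<le> s" if "0 \<le> s" "s \<le> 1" for s :: real
    using that q powr_le_one_le[of s q] by (cases "s = 0") auto
  show "((1 - t) *\<^sub>R x + t *\<^sub>R y) powr q \<le> (1 - t) * x powr q + t * y powr q"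
  proof (cases "x = 0 \<or> y = 0")
    case True
    then show ?thesis
    proof
      assume "x = 0"
      then have "((1 - t) *\<^sub>R x + t *\<^sub>R y) powr q = t powr q * y powr q"
        using xy t by (simp add: powr_mult)
      also have "\<dots> \<le> t * y powr q" using below_id[of t] t by (intro mult_right_mono) auto
      finally show ?thesis using \<open>x = 0\<close> by simp
    next
      assume "y = 0"
      then have "((1 - t) *\<^sub>R x + t *\<^sub>R y) powr q = (1 - t) powr q * x powr q"
        using xy t by (simp add: powr_mult)
      also have "\<dots> \<le> (1 - t) * x powr q" using below_id[of "1 - t"] t by (intro mult_right_mono) auto
      finally show ?thesis using \<open>y = 0\<close> by simp
    qed
  next
    case False
    then have "x \<in> {0<..}" "y \<in> {0<..}" using xy by auto
    with convex_onD[OF powr_convex[OF q], of t x y] t show ?thesis by simp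
  qed
qed (simp add: convex_real_interval)

lemma abs_convex_comb_powr_le:
  fixes \<theta> z :: "'a \<Rightarrow> real"
  assumes "finite I" "I \<noteq> {}" "q \<ge> 1" "\<And>i. i \<in> I \<Longrightarrow> \<theta> i \<ge> 0" "(\<Sum>i\<in>I. \<theta> i) = 1"
  shows "\<bar>\<Sum>i\<in>I. \<theta> i * z i\<bar> powr q \<le> (\<Sum>i\<in>I. \<theta> i * \<bar>z i\<bar> powr q)"
proof -
  have "\<bar>\<Sum>i\<in>I. \<theta> i * z i\<bar> \<le> (\<Sum>i\<in>I. \<theta> i * \<bar>z i\<bar>)"
    by (rule order.trans[OF sum_abs]) (simp add: abs_mult assms(4))
  then have "\<bar>\<Sum>i\<in>I. \<theta> i * z i\<bar> powr q \<le> (\<Sum>i\<in>I. \<theta> i * \<bar>z i\<bar>) powr q"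
    using assms by (intro powr_mono2) auto
  also have "\<dots> \<le> (\<Sum>i\<in>I. \<theta> i * \<bar>z i\<bar> powr q)"
    using convex_on_sum[OF assms(1,2) convex_on_powr_nonneg[OF assms(3)] assms(5) assms(4),
        of "\<lambda>i. \<bar>z i\<bar>"] by simp
  finally show ?thesis .
qed

lemma abs_add_powr_le_convex:
  fixes a b A B q :: real
  assumes q: "q \<ge> 1" and AB: "0 < A" "0 < B"
  shows "\<bar>a + b\<bar> powr q \<le>
    (A + B) powr q * (A / (A + B) * (\<bar>a\<bar> / A) powr q + B / (A + B) * (\<bar>b\<bar> / B) powr q)"
proof -
  define t where "t = A / (A + B)"
  have t: "0 \<le> t" "t \<le> 1" "1 - t = B / (A + B)" using AB by (auto simp: t_def field_simps)
  have "\<bar>a + b\<bar> powr q \<le> (\<bar>a\<bar> + \<bar>b\<bar>) powr q"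
    using q by (intro powr_mono2) auto
  also have "\<bar>a\<bar> + \<bar>b\<bar> = (A + B) * ((1 - t) * (\<bar>b\<bar> / B) + t * (\<bar>a\<bar> / A))"
  proof -
    have "(1 - t) * (\<bar>b\<bar> / B) + t * (\<bar>a\<bar> / A) = (\<bar>a\<bar> + \<bar>b\<bar>) / (A + B)"
      unfolding t(3) using AB by (simp add: t_def add_divide_distrib)
    then show ?thesis using AB by simp
  qed
  also have "((A + B) * ((1 - t) * (\<bar>b\<bar> / B) + t * (\<bar>a\<bar> / A))) powr q
      = (A + B) powr q * ((1 - t) * (\<bar>b\<bar> / B) + t * (\<bar>a\<bar> / A)) powr q"
    using AB t by (auto intro: powr_mult)
  also have "\<dots> \<le> (A + B) powr q * ((1 - t) * (\<bar>b\<bar> / B) powr q + t * (\<bar>a\<bar> / A) powr q)"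
  proof (cases "t = 0 \<or> t = 1")
    case True
    then show ?thesis by auto
  next
    case False
    with t have "0 < t" "t < 1" by auto
    with convex_onD[OF convex_on_powr_nonneg[OF q], of t "\<bar>b\<bar> / B" "\<bar>a\<bar> / A"] AB
    show ?thesis by (intro mult_left_mono) auto
  qed
  finally have "\<bar>a + b\<bar> powr q \<le>
    (A + B) powr q * ((1 - t) * (\<bar>b\<bar> / B) powr q + t * (\<bar>a\<bar> / A) powr q)" .
  from this[unfolded t(3), unfolded t_def] show ?thesis by (simp only: add.commute)
qed

lemma minkowski_summable:
  fixes a b :: "nat \<Rightarrow> real"
  assumes q: "q \<ge> 1" and sa: "summable (\<lambda>n. \<bar>a n\<bar> powr q)" and sb: "summable (\<lambda>n. \<bar>b n\<bar> powr q)"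
  shows "summable (\<lambda>n. \<bar>a n + b n\<bar> powr q)"
    and "(\<Sum>n. \<bar>a n + b n\<bar> powr q) powr (1/q) \<le> (\<Sum>n. \<bar>a n\<bar> powr q) powr (1/q) + (\<Sum>n. \<bar>b n\<bar> powr q) powr (1/q)"
proof -
  define SA where "SA = (\<Sum>n. \<bar>a n\<bar> powr q)"
  define SB where "SB = (\<Sum>n. \<bar>b n\<bar> powr q)"
  define A where "A = SA powr (1/q)"
  define B where "B = SB powr (1/q)"
  have SA0: "SA \<ge> 0" unfolding SA_def by (rule suminf_nonneg[OF sa]) simp
  have SB0: "SB \<ge> 0" unfolding SB_def by (rule suminf_nonneg[OF sb]) simp
  have Aq: "A powr q = SA" using SA0 q by (simp add: A_def powr_powr)
  have Bq: "B powr q = SB" using SB0 q by (simp add: B_def powr_powr)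
  have "summable (\<lambda>n. \<bar>a n + b n\<bar> powr q) \<and>
    (\<Sum>n. \<bar>a n + b n\<bar> powr q) powr (1/q) \<le> A + B"
  proof (cases "A = 0 \<or> B = 0")
    case True
    then have "(\<forall>n. a n = 0) \<or> (\<forall>n. b n = 0)"
      using Aq Bq q suminf_eq_zero_iff[OF sa] suminf_eq_zero_iff[OF sb]
      by (auto simp: SA_def SB_def)
    then show ?thesis using sa sb by (auto simp: A_def B_def SA_def SB_def)
  next
    case False
    then have AB: "A > 0" "B > 0" by (auto simp: A_def B_def)
    then have SAB: "SA > 0" "SB > 0" using Aq Bq by auto
    define g where "g n = (A + B) powr q *
      (A / (A + B) * (\<bar>a n\<bar> powr q / SA) + B / (A + B) * (\<bar>b n\<bar> powr q / SB))" for n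
    have pt: "\<bar>a n + b n\<bar> powr q \<le> g n" for n
      using abs_add_powr_le_convex[OF q AB, of "a n" "b n"] AB by (simp add: g_def powr_divide Aq Bq)
    have g_sums: "g sums ((A + B) powr q)"
    proof -
      have "g sums ((A + B) powr q * (A / (A + B) * (SA / SA) + B / (A + B) * (SB / SB)))"
        unfolding g_def using sa sb
        by (intro sums_mult sums_add sums_divide) (auto simp: SA_def SB_def summable_sums)
      then show ?thesis using AB SAB by (simp add: add_divide_distrib[symmetric])
    qed
    have sab: "summable (\<lambda>n. \<bar>a n + b n\<bar> powr q)"
      by (rule summable_comparison_test[OF _ sums_summable[OF g_sums]]) (use pt in auto)
    have "(\<Sum>n. \<bar>a n + b n\<bar> powr q) \<le> (A + B) powr q"
      using suminf_le[OF pt sab sums_summable[OF g_sums]] sums_unique[OF g_sums] by simp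
    then have "(\<Sum>n. \<bar>a n + b n\<bar> powr q) powr (1/q) \<le> ((A + B) powr q) powr (1/q)"
      using q by (intro powr_mono2) (auto intro: suminf_nonneg[OF sab])
    also have "\<dots> = A + B" using AB q by (simp add: powr_powr)
    finally show ?thesis using sab by simp
  qed
  then show "summable (\<lambda>n. \<bar>a n + b n\<bar> powr q)"
    and "(\<Sum>n. \<bar>a n + b n\<bar> powr q) powr (1/q) \<le> (\<Sum>n. \<bar>a n\<bar> powr q) powr (1/q) + (\<Sum>n. \<bar>b n\<bar> powr q) powr (1/q)"
    by (simp_all add: A_def B_def SA_def SB_def)
qed

lemma suminf_tail:
  fixes f :: "nat \<Rightarrow> real"
  assumes "summable f"
  shows "summable (\<lambda>n. if n < M then 0 else f n)"
    and "(\<Sum>n. if n < M then 0 else f n) = suminf f - (\<Sum>i<M. f i)"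
proof -
  have e: "(\<lambda>n. if n < M then 0 else f n) = (\<lambda>n. f n - (if n \<in> {..<M} then f n else 0))" by auto
  have "(\<lambda>n. if n < M then 0 else f n) sums (suminf f - (\<Sum>i<M. f i))"
    unfolding e by (intro sums_diff summable_sums assms sums_If_finite_set) auto
  then show "summable (\<lambda>n. if n < M then 0 else f n)"
    and "(\<Sum>n. if n < M then 0 else f n) = suminf f - (\<Sum>i<M. f i)"
    by (auto simp: sums_iff)
qed

lemma suminf_tail_tendsto_0:
  fixes f :: "nat \<Rightarrow> real"
  assumes "summable f"
  shows "(\<lambda>M. \<Sum>n. if n < M then 0 else f n) \<longlonglongrightarrow> 0"
proof -
  have "(\<lambda>M. suminf f - (\<Sum>i<M. f i)) \<longlonglongrightarrow> suminf f - suminf f"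
    by (intro tendsto_diff tendsto_const summable_LIMSEQ assms)
  then show ?thesis by (simp add: suminf_tail[OF assms])
qed

lemma suminf_tail_le:
  fixes g :: "nat \<Rightarrow> real"
  assumes "summable g" "\<And>n. 0 \<le> g n"
  shows "(\<Sum>n. if n < s then 0 else g n) \<le> suminf g"
  using assms by (intro suminf_le suminf_tail(1)) auto

lemma sum_shift_le_suminf_tail:
  fixes g :: "nat \<Rightarrow> real"
  assumes g: "summable g" "\<And>n. 0 \<le> g n"
  shows "(\<Sum>i<l. g (s + i)) \<le> (\<Sum>n. if n < s then 0 else g n)"
proof -
  have "(\<Sum>i<l. g (s + i)) = (\<Sum>n\<in>{s..<s + l}. if n < s then 0 else g n)"
    using sum.shift_bounds_nat_ivl[of g 0 s l] by (simp add: atLeast0LessThan add.commute)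
  also have "\<dots> \<le> (\<Sum>n. if n < s then 0 else g n)"
    by (rule sum_le_suminf[OF suminf_tail(1)[OF g(1)]]) (use g(2) in auto)
  finally show ?thesis .
qed

lemma comp_sum_disjoint_support:
  fixes g :: "'a \<Rightarrow> real" and \<phi> :: "real \<Rightarrow> real"
  assumes I: "finite I" and d: "\<And>i j. i \<in> I \<Longrightarrow> j \<in> I \<Longrightarrow> i \<noteq> j \<Longrightarrow> g i = 0 \<or> g j = 0"
    and z: "\<phi> 0 = 0"
  shows "\<phi> (\<Sum>i\<in>I. g i) = (\<Sum>i\<in>I. \<phi> (g i))"
proof (cases "\<exists>i\<in>I. g i \<noteq> 0")
  case False
  then show ?thesis using z by simp
next
  case True
  then obtain i0 where i0: "i0 \<in> I" "g i0 \<noteq> 0" by blast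
  have others: "i \<in> I - {i0} \<Longrightarrow> g i = 0" for i using d[of i0 i] i0 by auto
  have "(\<Sum>i\<in>I. g i) = g i0" "(\<Sum>i\<in>I. \<phi> (g i)) = \<phi> (g i0)"
    using sum.remove[OF I i0(1), of g] sum.remove[OF I i0(1), of "\<lambda>i. \<phi> (g i)"] others z by simp_all
  then show ?thesis by simp
qed

section \<open>Greedy choice of signs\<close>

text \<open>
  Choosing the signs \<open>\<epsilon>\<^sub>i\<close> one at a time, each so that its cross terms with the previous ones
  add up to something nonnegative, makes the quadratic form \<open>\<Sum>\<^sub>i\<^sub>j \<epsilon>\<^sub>i \<epsilon>\<^sub>j G\<^sub>i\<^sub>j\<close> at least the trace of \<open>G\<close>.
\<close>

primrec greedy_prefix :: "(nat \<Rightarrow> nat \<Rightarrow> real) \<Rightarrow> nat \<Rightarrow> nat \<Rightarrow> real" where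
  "greedy_prefix H 0 = (\<lambda>_. 1)"
| "greedy_prefix H (Suc i) =
     (greedy_prefix H i)(i := (if 0 \<le> (\<Sum>j<i. greedy_prefix H i j * H i j) then 1 else -1))"

definition greedy_sign :: "(nat \<Rightarrow> nat \<Rightarrow> real) \<Rightarrow> nat \<Rightarrow> real" where
  "greedy_sign H i = greedy_prefix H (Suc i) i"

lemma greedy_prefix_stable: "j < i \<Longrightarrow> greedy_prefix H i j = greedy_sign H j"
proof (induction i)
  case (Suc i)
  then show ?case by (cases "j = i") (auto simp: greedy_sign_def)
qed simp

lemma greedy_sign_sq: "greedy_sign H i * greedy_sign H i = 1"
  by (simp add: greedy_sign_def)

lemma abs_greedy_sign: "\<bar>greedy_sign H i\<bar> = 1"
  by (simp add: greedy_sign_def)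

lemma diag_le_greedy_quadratic_form:
  fixes G :: "nat \<Rightarrow> nat \<Rightarrow> real"
  defines "e \<equiv> greedy_sign (\<lambda>i j. G i j + G j i)"
  shows "(\<Sum>i<n. G i i) \<le> (\<Sum>i<n. \<Sum>j<n. e i * e j * G i j)"
proof (induction n)
  case (Suc n)
  define S where "S = (\<Sum>j<n. e j * (G n j + G j n))"
  have en: "e n = (if 0 \<le> S then 1 else -1)"
  proof -
    have "(\<Sum>j<n. greedy_prefix (\<lambda>i j. G i j + G j i) n j * (G n j + G j n)) = S"
      unfolding S_def e_def by (rule sum.cong) (simp_all add: greedy_prefix_stable)
    then show ?thesis unfolding e_def greedy_sign_def by simp
  qed
  have "(\<Sum>i<Suc n. \<Sum>j<Suc n. e i * e j * G i j)
      = (\<Sum>i<n. \<Sum>j<n. e i * e j * G i j) + e n * S + e n * e n * G n n"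
    unfolding S_def by (simp add: sum.distrib sum_distrib_left algebra_simps)
  moreover have "e n * e n = 1" unfolding e_def by (rule greedy_sign_sq)
  moreover have "0 \<le> e n * S" unfolding en by auto
  ultimately show ?case using Suc by simp
qed simp

section \<open>The space \<open>X\<^sub>p\<^sub>,\<^sub>w\<close>\<close>

locale Xpw_space =
  fixes p :: real and w :: "nat \<Rightarrow> real"
  assumes p_ge_1: "1 \<le> p"
begin

abbreviation "X \<equiv> Xpw p w"
abbreviation "N \<equiv> Xpw_norm p w"

definition Sp :: "(nat \<Rightarrow> real) \<Rightarrow> real" where "Sp x = (\<Sum>n. \<bar>x n\<bar> powr p)"
definition S2 :: "(nat \<Rightarrow> real) \<Rightarrow> real" where "S2 x = (\<Sum>n. (x n * w n)\<^sup>2)"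

lemma p_pos: "0 < p" using p_ge_1 by simp

lemma N_eq: "N x = max (Sp x powr (1/p)) (sqrt (S2 x))"
  by (simp add: Xpw_norm_def lp_norm_def wl2_norm_def Sp_def S2_def)

lemma Xpw_iff: "x \<in> X \<longleftrightarrow> summable (\<lambda>n. \<bar>x n\<bar> powr p) \<and> summable (\<lambda>n. (x n * w n)\<^sup>2)"
  by (simp add: Xpw_def)

lemma XpwD: assumes "x \<in> X" shows "summable (\<lambda>n. \<bar>x n\<bar> powr p)" "summable (\<lambda>n. (x n * w n)\<^sup>2)"
  using assms by (auto simp: Xpw_iff)

lemma Sp_nonneg: "x \<in> X \<Longrightarrow> 0 \<le> Sp x"
  unfolding Sp_def by (rule suminf_nonneg) (auto dest: XpwD)

lemma S2_nonneg: "x \<in> X \<Longrightarrow> 0 \<le> S2 x"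
  unfolding S2_def by (rule suminf_nonneg) (auto dest: XpwD)

lemma N_nonneg: "0 \<le> N x"
  unfolding N_eq by (simp add: le_max_iff_disj)

lemma Sp_le_N: assumes "x \<in> X" shows "Sp x \<le> N x powr p"
proof -
  have "Sp x = (Sp x powr (1/p)) powr p" using Sp_nonneg[OF assms] p_pos by (simp add: powr_powr)
  also have "\<dots> \<le> N x powr p" unfolding N_eq using p_pos by (intro powr_mono2) auto
  finally show ?thesis .
qed

lemma S2_le_N: assumes "x \<in> X" shows "S2 x \<le> (N x)\<^sup>2"
proof -
  have "S2 x = (sqrt (S2 x))\<^sup>2" using S2_nonneg[OF assms] by simp
  also have "\<dots> \<le> (N x)\<^sup>2" unfolding N_eq using S2_nonneg[OF assms] by (intro power_mono) auto
  finally show ?thesis .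
qed

lemma N_leI:
  assumes "x \<in> X" "0 \<le> C" "Sp x \<le> C powr p" "S2 x \<le> C\<^sup>2"
  shows "N x \<le> C"
proof -
  have "Sp x powr (1/p) \<le> (C powr p) powr (1/p)"
    using assms Sp_nonneg p_pos by (intro powr_mono2) auto
  also have "\<dots> = C" using assms p_pos by (simp add: powr_powr)
  finally have 1: "Sp x powr (1/p) \<le> C" .
  have "sqrt (S2 x) \<le> C" using real_sqrt_le_mono[OF assms(4)] assms(2) by simp
  with 1 show ?thesis unfolding N_eq by simp
qed

lemma abs_coord_le_N: assumes "x \<in> X" shows "\<bar>x n\<bar> \<le> N x"
proof -
  have "\<bar>x n\<bar> powr p \<le> Sp x"
    unfolding Sp_def using sum_le_suminf[OF XpwD(1)[OF assms], of "{n}"] by simp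
  then have "(\<bar>x n\<bar> powr p) powr (1/p) \<le> Sp x powr (1/p)"
    using p_pos by (intro powr_mono2) auto
  then have "\<bar>x n\<bar> \<le> Sp x powr (1/p)" using p_pos by (simp add: powr_powr)
  then show ?thesis unfolding N_eq by simp
qed

lemma Xpw_dominated:
  assumes x: "x \<in> X" and le: "\<And>n. \<bar>y n\<bar> \<le> \<bar>x n\<bar>"
  shows "y \<in> X" "Sp y \<le> Sp x" "S2 y \<le> S2 x" "N y \<le> N x"
proof -
  have a: "\<bar>y n\<bar> powr p \<le> \<bar>x n\<bar> powr p" for n using le p_pos by (intro powr_mono2) auto
  have b: "(y n * w n)\<^sup>2 \<le> (x n * w n)\<^sup>2" for n
    using le by (simp add: power_mult_distrib abs_le_square_iff mult_right_mono)
  have sa: "summable (\<lambda>n. \<bar>y n\<bar> powr p)"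
    by (rule summable_comparison_test[OF _ XpwD(1)[OF x]]) (use a in auto)
  have sb: "summable (\<lambda>n. (y n * w n)\<^sup>2)"
    by (rule summable_comparison_test[OF _ XpwD(2)[OF x]]) (use b in auto)
  show "y \<in> X" using sa sb by (simp add: Xpw_iff)
  show 1: "Sp y \<le> Sp x" unfolding Sp_def by (rule suminf_le[OF a sa XpwD(1)[OF x]])
  show 2: "S2 y \<le> S2 x" unfolding S2_def by (rule suminf_le[OF b sb XpwD(2)[OF x]])
  have "Sp y powr (1/p) \<le> Sp x powr (1/p)"
    using 1 Sp_nonneg \<open>y \<in> X\<close> p_pos by (intro powr_mono2) auto
  moreover have "sqrt (S2 y) \<le> sqrt (S2 x)" using 2 by (rule real_sqrt_le_mono)
  ultimately show "N y \<le> N x" unfolding N_eq by (rule max.mono)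
qed

lemma Sp_scale: "x \<in> X \<Longrightarrow> Sp (\<lambda>n. c * x n) = \<bar>c\<bar> powr p * Sp x"
  unfolding Sp_def by (simp add: abs_mult powr_mult suminf_mult[OF XpwD(1)])

lemma S2_scale:
  assumes x: "x \<in> X" shows "S2 (\<lambda>n. c * x n) = c\<^sup>2 * S2 x"
proof -
  have "(\<lambda>n. (c * x n * w n)\<^sup>2) = (\<lambda>n. c\<^sup>2 * (x n * w n)\<^sup>2)"
    by (simp add: power_mult_distrib mult.assoc)
  then show ?thesis unfolding S2_def using suminf_mult[OF XpwD(2)[OF x]] by simp
qed

lemma Xpw_scale:
  assumes x: "x \<in> X"
  shows "(\<lambda>n. c * x n) \<in> X" "N (\<lambda>n. c * x n) = \<bar>c\<bar> * N x"
proof -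
  show "(\<lambda>n. c * x n) \<in> X"
    using XpwD[OF x] unfolding Xpw_iff
    by (simp add: abs_mult powr_mult power_mult_distrib mult.assoc summable_mult)
  have "Sp (\<lambda>n. c * x n) powr (1/p) = \<bar>c\<bar> * Sp x powr (1/p)"
    using p_pos by (simp add: Sp_scale[OF x] powr_mult powr_powr)
  moreover have "sqrt (S2 (\<lambda>n. c * x n)) = \<bar>c\<bar> * sqrt (S2 x)"
    by (simp add: S2_scale[OF x] real_sqrt_mult)
  ultimately show "N (\<lambda>n. c * x n) = \<bar>c\<bar> * N x"
    unfolding N_eq by (simp add: max_mult_distrib_left)
qed

lemma Xpw_add:
  assumes x: "x \<in> X" and y: "y \<in> X"
  shows "(\<lambda>n. x n + y n) \<in> X" "N (\<lambda>n. x n + y n) \<le> N x + N y"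
proof -
  note m1 = minkowski_summable[OF p_ge_1 XpwD(1)[OF x] XpwD(1)[OF y]]
  have xw: "summable (\<lambda>n. \<bar>x n * w n\<bar> powr 2)" "summable (\<lambda>n. \<bar>y n * w n\<bar> powr 2)"
    using XpwD(2)[OF x] XpwD(2)[OF y] by simp_all
  note m2 = minkowski_summable[of 2, OF _ xw]
  have e: "\<bar>x n * w n + y n * w n\<bar> powr 2 = ((x n + y n) * w n)\<^sup>2" for n
    by (simp add: algebra_simps)
  show xy: "(\<lambda>n. x n + y n) \<in> X" using m1 m2 unfolding Xpw_iff e by simp
  have lp: "Sp (\<lambda>n. x n + y n) powr (1/p) \<le> N x + N y"
  proof -
    have "Sp (\<lambda>n. x n + y n) powr (1/p) \<le> Sp x powr (1/p) + Sp y powr (1/p)"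
      using m1(2) by (simp add: Sp_def)
    also have "\<dots> \<le> N x + N y" unfolding N_eq by (intro add_mono) auto
    finally show ?thesis .
  qed
  have l2: "sqrt (S2 (\<lambda>n. x n + y n)) \<le> N x + N y"
  proof -
    have "sqrt (S2 (\<lambda>n. x n + y n)) = (\<Sum>n. \<bar>x n * w n + y n * w n\<bar> powr 2) powr (1/2)"
      unfolding S2_def e using S2_nonneg[OF xy] by (simp add: S2_def powr_half_sqrt)
    also have "\<dots> \<le> (\<Sum>n. \<bar>x n * w n\<bar> powr 2) powr (1/2) + (\<Sum>n. \<bar>y n * w n\<bar> powr 2) powr (1/2)"
      using m2(2) by simp
    also have "\<dots> = sqrt (S2 x) + sqrt (S2 y)"
      using S2_nonneg[OF x] S2_nonneg[OF y] by (simp add: S2_def powr_half_sqrt)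
    also have "\<dots> \<le> N x + N y" unfolding N_eq by (intro add_mono) auto
    finally show ?thesis .
  qed
  show "N (\<lambda>n. x n + y n) \<le> N x + N y" using lp l2 unfolding N_eq[of "\<lambda>n. x n + y n"] by simp
qed

lemma Xpw_zero: "(\<lambda>n. 0) \<in> X" and N_zero: "N (\<lambda>n. 0) = 0"
  by (simp_all add: Xpw_iff N_eq Sp_def S2_def)

lemma Xpw_diff:
  assumes x: "x \<in> X" and y: "y \<in> X"
  shows "(\<lambda>n. x n - y n) \<in> X" "N (\<lambda>n. x n - y n) \<le> N x + N y"
proof -
  have "(\<lambda>n. (-1) * y n) \<in> X" "N (\<lambda>n. (-1) * y n) = N y" using Xpw_scale[OF y, of "-1"] by auto
  from Xpw_add[OF x this(1)] this(2) show "(\<lambda>n. x n - y n) \<in> X" "N (\<lambda>n. x n - y n) \<le> N x + N y" by simp_all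
qed

lemma Xpw_finite_support: assumes "\<And>n. n \<ge> M \<Longrightarrow> x n = 0" shows "x \<in> X"
proof -
  have "summable (\<lambda>n. \<bar>x n\<bar> powr p)"
    by (rule summable_finite[of "{..<M}"]) (auto simp: assms not_less)
  moreover have "summable (\<lambda>n. (x n * w n)\<^sup>2)"
    by (rule summable_finite[of "{..<M}"]) (auto simp: assms not_less)
  ultimately
  show ?thesis by (simp add: Xpw_iff)
qed

lemma unit_vec_Xpw: "unit_vec k \<in> X"
  by (rule Xpw_finite_support[of "Suc k"]) (simp add: unit_vec_def)

lemma Xpw_sum:
  assumes "finite I" "\<And>i. i \<in> I \<Longrightarrow> f i \<in> X"
  shows "(\<lambda>n. \<Sum>i\<in>I. f i n) \<in> X \<and> N (\<lambda>n. \<Sum>i\<in>I. f i n) \<le> (\<Sum>i\<in>I. N (f i))"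
  using assms
proof (induction I rule: finite_induct)
  case empty
  then show ?case using Xpw_zero N_zero by simp
next
  case (insert i I)
  then have IH: "(\<lambda>n. \<Sum>i\<in>I. f i n) \<in> X" "N (\<lambda>n. \<Sum>i\<in>I. f i n) \<le> (\<Sum>i\<in>I. N (f i))" by auto
  have fi: "f i \<in> X" using insert by auto
  have e: "(\<lambda>n. \<Sum>i\<in>insert i I. f i n) = (\<lambda>n. f i n + (\<Sum>i\<in>I. f i n))" using insert by simp
  show ?case unfolding e using Xpw_add[OF fi IH(1)] IH(2) insert(1,2) by simp
qed

lemma Xpw_bounded_partial_sums:
  assumes C: "0 \<le> C"
    and A: "\<And>K. (\<Sum>n<K. \<bar>x n\<bar> powr p) \<le> C powr p"
    and B: "\<And>K. (\<Sum>n<K. (x n * w n)\<^sup>2) \<le> C\<^sup>2"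
  shows "x \<in> X" "N x \<le> C"
proof -
  have s1: "summable (\<lambda>n. \<bar>x n\<bar> powr p)"
    by (rule bounded_imp_summable[of _ "C powr p"]) (simp, metis A lessThan_Suc_atMost)
  have s2: "summable (\<lambda>n. (x n * w n)\<^sup>2)"
    by (rule bounded_imp_summable[of _ "C\<^sup>2"]) (simp, metis B lessThan_Suc_atMost)
  show xX: "x \<in> X" using s1 s2 by (simp add: Xpw_iff)
  show "N x \<le> C"
    by (rule N_leI[OF xX C]) (unfold Sp_def S2_def, (rule suminf_le_const; use s1 s2 A B in auto)+)
qed

lemma Xpw_pointwise_limit:
  assumes xs: "\<And>M. xs M \<in> X" and bd: "\<And>M. N (xs M) \<le> C"
    and lim: "\<And>n. (\<lambda>M. xs M n) \<longlonglongrightarrow> x n"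
  shows "x \<in> X" "N x \<le> C"
proof -
  have C0: "0 \<le> C" using bd[of 0] N_nonneg[of "xs 0"] by linarith
  have A: "(\<Sum>n<K. \<bar>x n\<bar> powr p) \<le> C powr p" for K
  proof -
    have "(\<lambda>M. \<Sum>n<K. \<bar>xs M n\<bar> powr p) \<longlonglongrightarrow> (\<Sum>n<K. \<bar>x n\<bar> powr p)"
      using p_pos by (intro tendsto_sum tendsto_powr' tendsto_rabs lim tendsto_const) auto
    moreover have "(\<Sum>n<K. \<bar>xs M n\<bar> powr p) \<le> C powr p" for M
    proof -
      have "(\<Sum>n<K. \<bar>xs M n\<bar> powr p) \<le> Sp (xs M)"
        unfolding Sp_def by (rule sum_le_suminf[OF XpwD(1)[OF xs]]) auto
      also have "\<dots> \<le> N (xs M) powr p" by (rule Sp_le_N[OF xs])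
      also have "\<dots> \<le> C powr p" using bd p_pos N_nonneg by (intro powr_mono2) auto
      finally show ?thesis .
    qed
    ultimately show ?thesis by (intro LIMSEQ_le_const2[of _ "\<Sum>n<K. \<bar>x n\<bar> powr p"]) auto
  qed
  have B: "(\<Sum>n<K. (x n * w n)\<^sup>2) \<le> C\<^sup>2" for K
  proof -
    have "(\<lambda>M. \<Sum>n<K. (xs M n * w n)\<^sup>2) \<longlonglongrightarrow> (\<Sum>n<K. (x n * w n)\<^sup>2)"
      by (intro tendsto_sum tendsto_power tendsto_mult lim tendsto_const)
    moreover have "(\<Sum>n<K. (xs M n * w n)\<^sup>2) \<le> C\<^sup>2" for M
    proof -
      have "(\<Sum>n<K. (xs M n * w n)\<^sup>2) \<le> S2 (xs M)"
        unfolding S2_def by (rule sum_le_suminf[OF XpwD(2)[OF xs]]) auto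
      also have "\<dots> \<le> (N (xs M))\<^sup>2" by (rule S2_le_N[OF xs])
      also have "\<dots> \<le> C\<^sup>2" using bd N_nonneg by (intro power_mono) auto
      finally show ?thesis .
    qed
    ultimately show ?thesis by (intro LIMSEQ_le_const2[of _ "\<Sum>n<K. (x n * w n)\<^sup>2"]) auto
  qed
  show "x \<in> X" "N x \<le> C" using Xpw_bounded_partial_sums[OF C0 A B] by auto
qed

lemma Xpw_truncate: assumes "x \<in> X"
  shows "(\<lambda>n. if n < M then x n else 0) \<in> X" "N (\<lambda>n. if n < M then x n else 0) \<le> N x"
    "(\<lambda>n. if n < M then 0 else x n) \<in> X" "N (\<lambda>n. if n < M then 0 else x n) \<le> N x"
  by (rule Xpw_dominated[OF assms]; simp)+

lemma N_tail_tendsto_0: assumes x: "x \<in> X"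
  shows "(\<lambda>M. N (\<lambda>n. if n < M then 0 else x n)) \<longlonglongrightarrow> 0"
proof -
  define t where "t M = (\<lambda>n. if n < M then 0 else x n)" for M
  have tX: "t M \<in> X" for M unfolding t_def by (rule Xpw_truncate[OF x])
  have sp: "Sp (t M) = (\<Sum>n. if n < M then 0 else \<bar>x n\<bar> powr p)" for M
    unfolding Sp_def t_def by (rule arg_cong[where f=suminf]) auto
  have s2: "S2 (t M) = (\<Sum>n. if n < M then 0 else (x n * w n)\<^sup>2)" for M
    unfolding S2_def t_def by (rule arg_cong[where f=suminf]) auto
  have f0: "(\<lambda>M. Sp (t M)) \<longlonglongrightarrow> 0" unfolding sp by (rule suminf_tail_tendsto_0[OF XpwD(1)[OF x]])
  have l1: "(\<lambda>M. Sp (t M) powr (1/p)) \<longlonglongrightarrow> 0 powr (1/p)"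
    by (rule tendsto_powr'[OF f0 tendsto_const]) (use p_pos Sp_nonneg[OF tX] in auto)
  have g0: "(\<lambda>M. S2 (t M)) \<longlonglongrightarrow> 0" unfolding s2 by (rule suminf_tail_tendsto_0[OF XpwD(2)[OF x]])
  have l2: "(\<lambda>M. sqrt (S2 (t M))) \<longlonglongrightarrow> sqrt 0"
    by (rule tendsto_real_sqrt[OF g0])
  have h: "(\<lambda>M. Sp (t M) powr (1/p) + sqrt (S2 (t M))) \<longlonglongrightarrow> 0"
    using tendsto_add[OF l1 l2] by simp
  have le: "N (t M) \<le> Sp (t M) powr (1/p) + sqrt (S2 (t M))" for M
  proof -
    have "0 \<le> sqrt (S2 (t M))" using S2_nonneg[OF tX] by simp
    then show ?thesis unfolding N_eq by simp
  qed
  have "(\<lambda>M. N (t M)) \<longlonglongrightarrow> 0"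
    by (rule tendsto_sandwich[OF always_eventually always_eventually tendsto_const h])
       (use le N_nonneg in auto)
  then show ?thesis by (simp add: t_def)
qed

lemma disjoint_sum_Sp_S2:
  assumes I: "finite I" and f: "\<And>i. i \<in> I \<Longrightarrow> f i \<in> X"
    and d: "\<And>i j n. i \<in> I \<Longrightarrow> j \<in> I \<Longrightarrow> i \<noteq> j \<Longrightarrow> f i n = 0 \<or> f j n = 0"
  shows "Sp (\<lambda>n. \<Sum>i\<in>I. f i n) = (\<Sum>i\<in>I. Sp (f i))" "S2 (\<lambda>n. \<Sum>i\<in>I. f i n) = (\<Sum>i\<in>I. S2 (f i))"
proof -
  have a: "\<bar>\<Sum>i\<in>I. f i n\<bar> powr p = (\<Sum>i\<in>I. \<bar>f i n\<bar> powr p)" for n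
    using comp_sum_disjoint_support[OF I, of "\<lambda>i. f i n" "\<lambda>x. \<bar>x\<bar> powr p"] d by simp
  have b: "((\<Sum>i\<in>I. f i n) * w n)\<^sup>2 = (\<Sum>i\<in>I. (f i n * w n)\<^sup>2)" for n
  proof -
    have "((\<Sum>i\<in>I. f i n) * w n)\<^sup>2 = (\<Sum>i\<in>I. f i n * w n)\<^sup>2" by (simp add: sum_distrib_right)
    also have "\<dots> = (\<Sum>i\<in>I. (f i n * w n)\<^sup>2)"
      using comp_sum_disjoint_support[OF I, of "\<lambda>i. f i n * w n" "\<lambda>x. x\<^sup>2"] d by auto
    finally show ?thesis .
  qed
  show "Sp (\<lambda>n. \<Sum>i\<in>I. f i n) = (\<Sum>i\<in>I. Sp (f i))"
    unfolding Sp_def a by (rule suminf_sum) (use f XpwD in blast)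
  show "S2 (\<lambda>n. \<Sum>i\<in>I. f i n) = (\<Sum>i\<in>I. S2 (f i))"
    unfolding S2_def b by (rule suminf_sum) (use f XpwD in blast)
qed

lemma scaled_unit_vec:
  shows "(\<lambda>n. c * unit_vec m n) \<in> X" "Sp (\<lambda>n. c * unit_vec m n) = \<bar>c\<bar> powr p"
    "S2 (\<lambda>n. c * unit_vec m n) = (c * w m)\<^sup>2"
proof -
  show "(\<lambda>n. c * unit_vec m n) \<in> X" by (rule Xpw_scale(1)[OF unit_vec_Xpw])
  have "Sp (\<lambda>n. c * unit_vec m n) = (\<Sum>n\<in>{m}. \<bar>c * unit_vec m n\<bar> powr p)"
    unfolding Sp_def by (rule suminf_finite) (auto simp: unit_vec_def)
  then show "Sp (\<lambda>n. c * unit_vec m n) = \<bar>c\<bar> powr p" by (simp add: unit_vec_def)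
  have "S2 (\<lambda>n. c * unit_vec m n) = (\<Sum>n\<in>{m}. (c * unit_vec m n * w n)\<^sup>2)"
    unfolding S2_def by (rule suminf_finite) (auto simp: unit_vec_def)
  then show "S2 (\<lambda>n. c * unit_vec m n) = (c * w m)\<^sup>2" by (simp add: unit_vec_def)
qed

lemma unit_vec_comb:
  assumes I: "finite I" and inj: "inj_on m I"
  shows "(\<lambda>n. \<Sum>i\<in>I. c i * unit_vec (m i) n) \<in> X"
    "Sp (\<lambda>n. \<Sum>i\<in>I. c i * unit_vec (m i) n) = (\<Sum>i\<in>I. \<bar>c i\<bar> powr p)"
    "S2 (\<lambda>n. \<Sum>i\<in>I. c i * unit_vec (m i) n) = (\<Sum>i\<in>I. (c i * w (m i))\<^sup>2)"
proof -
  show "(\<lambda>n. \<Sum>i\<in>I. c i * unit_vec (m i) n) \<in> X"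
    using Xpw_sum[OF I, of "\<lambda>i n. c i * unit_vec (m i) n"] scaled_unit_vec by blast
  have d: "c i * unit_vec (m i) n = 0 \<or> c j * unit_vec (m j) n = 0" if "i \<in> I" "j \<in> I" "i \<noteq> j" for i j n
    using inj that by (auto simp: unit_vec_def inj_on_def)
  show "Sp (\<lambda>n. \<Sum>i\<in>I. c i * unit_vec (m i) n) = (\<Sum>i\<in>I. \<bar>c i\<bar> powr p)"
    using disjoint_sum_Sp_S2(1)[OF I, of "\<lambda>i n. c i * unit_vec (m i) n"] d scaled_unit_vec by simp
  show "S2 (\<lambda>n. \<Sum>i\<in>I. c i * unit_vec (m i) n) = (\<Sum>i\<in>I. (c i * w (m i))\<^sup>2)"
    using disjoint_sum_Sp_S2(2)[OF I, of "\<lambda>i n. c i * unit_vec (m i) n"] d scaled_unit_vec by simp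
qed

end

context Xpw_space begin

abbreviation "bop T \<equiv> bounded_op_Xpw p w T"

lemma bopD:
  assumes "bop T"
  shows "x \<in> X \<Longrightarrow> T x \<in> X"
    "x \<in> X \<Longrightarrow> y \<in> X \<Longrightarrow> T (\<lambda>k. x k + y k) = (\<lambda>k. T x k + T y k)"
    "x \<in> X \<Longrightarrow> T (\<lambda>k. c * x k) = (\<lambda>k. c * T x k)"
  using assms unfolding bounded_op_Xpw_def by auto

lemma bop_bound:
  assumes "bop T" obtains K where "K \<ge> 0" "\<And>x. x \<in> X \<Longrightarrow> N (T x) \<le> K * N x"
proof -
  obtain C where C: "\<forall>x\<in>X. N (T x) \<le> C * N x" using assms unfolding bounded_op_Xpw_def by auto
  show ?thesis
  proof (rule that[of "max C 0"])
    fix x assume "x \<in> X"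
    then have "N (T x) \<le> C * N x" using C by auto
    also have "\<dots> \<le> max C 0 * N x" using N_nonneg by (intro mult_right_mono) auto
    finally show "N (T x) \<le> max C 0 * N x" .
  qed simp
qed

lemma bopI:
  assumes "\<And>x. x \<in> X \<Longrightarrow> T x \<in> X"
    "\<And>x y. x \<in> X \<Longrightarrow> y \<in> X \<Longrightarrow> T (\<lambda>k. x k + y k) = (\<lambda>k. T x k + T y k)"
    "\<And>x c. x \<in> X \<Longrightarrow> T (\<lambda>k. c * x k) = (\<lambda>k. c * T x k)"
    "\<And>x. x \<in> X \<Longrightarrow> N (T x) \<le> K * N x"
  shows "bop T"
  using assms unfolding bounded_op_Xpw_def by blast

lemma bop_zero: assumes "bop T" shows "T (\<lambda>k. 0) = (\<lambda>k. 0)"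
  using bopD(3)[OF assms Xpw_zero, of 0] by simp

lemma bop_diff: assumes T: "bop T" and x: "x \<in> X" and y: "y \<in> X"
  shows "T (\<lambda>k. x k - y k) = (\<lambda>k. T x k - T y k)"
proof -
  have my: "(\<lambda>k. (-1) * y k) \<in> X" by (rule Xpw_scale[OF y])
  have "T (\<lambda>k. x k - y k) = T (\<lambda>k. x k + (-1) * y k)" by simp
  also have "\<dots> = (\<lambda>k. T x k + T (\<lambda>k. (-1) * y k) k)" by (rule bopD(2)[OF T x my])
  also have "\<dots> = (\<lambda>k. T x k - T y k)" using bopD(3)[OF T y, of "-1"] by simp
  finally show ?thesis .
qed

lemma bop_sum:
  assumes T: "bop T" and "finite I" and f: "\<And>i. i \<in> I \<Longrightarrow> f i \<in> X"
  shows "T (\<lambda>k. \<Sum>i\<in>I. c i * f i k) = (\<lambda>k. \<Sum>i\<in>I. c i * T (f i) k)"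
  using assms(2) f
proof (induction I rule: finite_induct)
  case empty
  then show ?case using bop_zero[OF T] by simp
next
  case (insert i I)
  have fi: "(\<lambda>k. c i * f i k) \<in> X" using insert Xpw_scale by auto
  have fI: "(\<lambda>k. \<Sum>i\<in>I. c i * f i k) \<in> X"
    using Xpw_sum[of I "\<lambda>i k. c i * f i k"] insert Xpw_scale by auto
  have "T (\<lambda>k. \<Sum>i\<in>insert i I. c i * f i k) = T (\<lambda>k. c i * f i k + (\<Sum>i\<in>I. c i * f i k))"
    using insert by simp
  also have "\<dots> = (\<lambda>k. T (\<lambda>k. c i * f i k) k + T (\<lambda>k. \<Sum>i\<in>I. c i * f i k) k)"
    by (rule bopD(2)[OF T fi fI])
  also have "\<dots> = (\<lambda>k. c i * T (f i) k + (\<Sum>i\<in>I. c i * T (f i) k))"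
    using insert bopD(3)[OF T, of "f i" "c i"] by simp
  finally show ?case using insert by simp
qed

lemma bop_comp: assumes A: "bop A" and B: "bop B" shows "bop (\<lambda>x. A (B x))"
proof -
  obtain KA where KA: "KA \<ge> 0" "\<And>x. x \<in> X \<Longrightarrow> N (A x) \<le> KA * N x" using bop_bound[OF A] by blast
  obtain KB where KB: "KB \<ge> 0" "\<And>x. x \<in> X \<Longrightarrow> N (B x) \<le> KB * N x" using bop_bound[OF B] by blast
  show ?thesis
  proof (rule bopI[where K="KA * KB"])
    fix x assume x: "x \<in> X"
    show "A (B x) \<in> X" using bopD(1)[OF A bopD(1)[OF B x]] .
    have "N (A (B x)) \<le> KA * N (B x)" using KA bopD(1)[OF B x] by auto
    also have "\<dots> \<le> KA * (KB * N x)" using KA KB x by (intro mult_left_mono) auto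
    finally show "N (A (B x)) \<le> KA * KB * N x" by simp
  next
    fix x y assume x: "x \<in> X" and y: "y \<in> X"
    show "A (B (\<lambda>k. x k + y k)) = (\<lambda>k. A (B x) k + A (B y) k)"
      using bopD(2)[OF B x y] bopD(2)[OF A bopD(1)[OF B x] bopD(1)[OF B y]] by simp
  next
    fix x c assume x: "x \<in> X"
    show "A (B (\<lambda>k. c * x k)) = (\<lambda>k. c * A (B x) k)"
      using bopD(3)[OF B x] bopD(3)[OF A bopD(1)[OF B x]] by simp
  qed
qed

lemma bop_id: "bop (\<lambda>x. x)"
  by (rule bopI[where K=1]) auto

lemma bop_diff_op: assumes A: "bop A" and B: "bop B" shows "bop (\<lambda>x k. A x k - B x k)"
proof -
  obtain KA where KA: "KA \<ge> 0" "\<And>x. x \<in> X \<Longrightarrow> N (A x) \<le> KA * N x" using bop_bound[OF A] by blast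
  obtain KB where KB: "KB \<ge> 0" "\<And>x. x \<in> X \<Longrightarrow> N (B x) \<le> KB * N x" using bop_bound[OF B] by blast
  show ?thesis
  proof (rule bopI[where K="KA + KB"])
    fix x assume x: "x \<in> X"
    show "(\<lambda>k. A x k - B x k) \<in> X" by (rule Xpw_diff(1)[OF bopD(1)[OF A x] bopD(1)[OF B x]])
    have "N (\<lambda>k. A x k - B x k) \<le> N (A x) + N (B x)" by (rule Xpw_diff(2)[OF bopD(1)[OF A x] bopD(1)[OF B x]])
    also have "\<dots> \<le> KA * N x + KB * N x" using KA(2)[OF x] KB(2)[OF x] by simp
    finally show "N (\<lambda>k. A x k - B x k) \<le> (KA + KB) * N x" by (simp add: algebra_simps)
  next
    fix x y assume x: "x \<in> X" and y: "y \<in> X"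
    show "(\<lambda>k. A (\<lambda>k. x k + y k) k - B (\<lambda>k. x k + y k) k) = (\<lambda>k. (A x k - B x k) + (A y k - B y k))"
      using bopD(2)[OF A x y] bopD(2)[OF B x y] by (simp add: algebra_simps)
  next
    fix x c assume x: "x \<in> X"
    show "(\<lambda>k. A (\<lambda>k. c * x k) k - B (\<lambda>k. c * x k) k) = (\<lambda>k. c * (A x k - B x k))"
      using bopD(3)[OF A x] bopD(3)[OF B x] by (simp add: algebra_simps)
  qed
qed

lemma bop_funpow: "bop F \<Longrightarrow> bop (F ^^ n)"
proof (induction n)
  case 0
  then show ?case using bop_id by (simp add: id_def)
next
  case (Suc n)
  then show ?case using bop_comp[of F "F ^^ n"] by (simp add: comp_def)
qed

lemma N_funpow_le:
  assumes F: "bop F" and Fq: "\<And>x. x \<in> X \<Longrightarrow> N (F x) \<le> q * N x" and q: "0 \<le> q" and x: "x \<in> X"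
  shows "N ((F ^^ n) x) \<le> q ^ n * N x"
proof (induction n)
  case (Suc n)
  have "N ((F ^^ Suc n) x) \<le> q * N ((F ^^ n) x)"
    using Fq bopD(1)[OF bop_funpow[OF F] x] by simp
  also have "\<dots> \<le> q * (q ^ n * N x)" using Suc q by (intro mult_left_mono) auto
  finally show ?case by simp
qed simp

lemma abs_funpow_coord_le:
  assumes F: "bop F" and Fq: "\<And>x. x \<in> X \<Longrightarrow> N (F x) \<le> q * N x" and q: "0 \<le> q" and x: "x \<in> X"
  shows "\<bar>(F ^^ n) x k\<bar> \<le> q ^ n * N x"
  using abs_coord_le_N[OF bopD(1)[OF bop_funpow[OF F] x]] N_funpow_le[OF F Fq q x] by (rule order_trans)

lemma summable_funpow_coord:
  assumes F: "bop F" and Fq: "\<And>x. x \<in> X \<Longrightarrow> N (F x) \<le> q * N x" and q: "0 \<le> q" "q < 1" and x: "x \<in> X"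
  shows "summable (\<lambda>n. (F ^^ n) x k)"
  by (rule summable_comparison_test[where g="\<lambda>n. q ^ n * N x"])
     (use abs_funpow_coord_le[OF F Fq q(1) x] q in \<open>auto intro!: summable_mult2 summable_geometric\<close>)

definition neumann_series :: "((nat \<Rightarrow> real) \<Rightarrow> nat \<Rightarrow> real) \<Rightarrow> (nat \<Rightarrow> real) \<Rightarrow> nat \<Rightarrow> real" where
  "neumann_series F x = (\<lambda>k. \<Sum>n. (F ^^ n) x k)"

lemma bop_neumann_series:
  assumes F: "bop F" and Fq: "\<And>x. x \<in> X \<Longrightarrow> N (F x) \<le> q * N x" and q: "0 \<le> q" "q < 1"
  shows "bop (neumann_series F)"
proof (rule bopI[where K="1 / (1 - q)"])
  fix x assume x: "x \<in> X"
  note summ = summable_funpow_coord[OF F Fq q x]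
  define xs where "xs M = (\<lambda>k. \<Sum>n<M. (F ^^ n) x k)" for M
  have xsX: "xs M \<in> X \<and> N (xs M) \<le> (\<Sum>n<M. N ((F ^^ n) x))" for M
    unfolding xs_def by (rule Xpw_sum) (use bopD(1)[OF bop_funpow[OF F] x] in auto)
  have "N (xs M) \<le> 1 / (1 - q) * N x" for M
  proof -
    have "N (xs M) \<le> (\<Sum>n<M. N ((F ^^ n) x))" using xsX[of M] by simp
    also have "\<dots> \<le> (\<Sum>n<M. q ^ n * N x)"
      by (rule sum_mono) (rule N_funpow_le[OF F Fq q(1) x])
    also have "\<dots> = (\<Sum>n<M. q ^ n) * N x" by (simp add: sum_distrib_right)
    also have "\<dots> \<le> 1 / (1 - q) * N x"
      using q N_nonneg by (intro mult_right_mono) (simp_all add: sum_gp_strict divide_right_mono)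
    finally show ?thesis .
  qed
  moreover have "(\<lambda>M. xs M k) \<longlonglongrightarrow> neumann_series F x k" for k
    unfolding xs_def neumann_series_def by (rule summable_LIMSEQ[OF summ])
  ultimately show "neumann_series F x \<in> X" "N (neumann_series F x) \<le> 1 / (1 - q) * N x"
    using Xpw_pointwise_limit[of xs _ "neumann_series F x"] xsX by blast+
  show "neumann_series F (\<lambda>k. c * x k) = (\<lambda>k. c * neumann_series F x k)" for c
    unfolding neumann_series_def using bopD(3)[OF bop_funpow[OF F] x, of _ c] suminf_mult[OF summ] by simp
next
  fix x y assume x: "x \<in> X" and y: "y \<in> X"
  show "neumann_series F (\<lambda>k. x k + y k) = (\<lambda>k. neumann_series F x k + neumann_series F y k)"
    unfolding neumann_series_def using bopD(2)[OF bop_funpow[OF F] x y]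
      suminf_add[OF summable_funpow_coord[OF F Fq q x] summable_funpow_coord[OF F Fq q y]] by simp
qed

lemma neumann_series_id_minus:
  assumes F: "bop F" and Fq: "\<And>x. x \<in> X \<Longrightarrow> N (F x) \<le> q * N x" and q: "0 \<le> q" "q < 1"
    and x: "x \<in> X"
  shows "neumann_series F (\<lambda>k. x k - F x k) = x"
proof
  fix k
  have telescope: "(F ^^ n) (\<lambda>k. x k - F x k) = (\<lambda>k. (F ^^ n) x k - (F ^^ Suc n) x k)" for n
    using bop_diff[OF bop_funpow[OF F] x bopD(1)[OF F x], of n]
    by (simp add: funpow_Suc_right del: funpow.simps)
  have "(\<lambda>n. (F ^^ n) x k) \<longlonglongrightarrow> 0"
  proof (rule Lim_null_comparison[where g="\<lambda>n. q ^ n * N x"])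
    show "\<forall>\<^sub>F n in sequentially. norm ((F ^^ n) x k) \<le> q ^ n * N x"
      using abs_funpow_coord_le[OF F Fq q(1) x] by (intro always_eventually allI) simp
    show "(\<lambda>n. q ^ n * N x) \<longlonglongrightarrow> 0"
      using q by (intro tendsto_mult_left_zero LIMSEQ_power_zero) simp
  qed
  then have "(\<lambda>n. (F ^^ n) x k - (F ^^ Suc n) x k) sums ((F ^^ 0) x k - 0)"
    by (rule telescope_sums')
  then show "neumann_series F (\<lambda>k. x k - F x k) k = x k"
    unfolding neumann_series_def telescope by (simp add: sums_iff)
qed

end

section \<open>Functionals on disjointly supported vectors\<close>

context Xpw_space begin

definition linear_fun :: "((nat \<Rightarrow> real) \<Rightarrow> real) \<Rightarrow> bool" where
  "linear_fun f \<longleftrightarrow> (\<forall>x\<in>X. \<forall>y\<in>X. f (\<lambda>k. x k + y k) = f x + f y) \<and> (\<forall>x\<in>X. \<forall>c. f (\<lambda>k. c * x k) = c * f x)"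

lemma linear_fun_sum:
  assumes f: "linear_fun f" and J: "finite J" and v: "\<And>i. i \<in> J \<Longrightarrow> v i \<in> X"
  shows "f (\<lambda>n. \<Sum>i\<in>J. c i * v i n) = (\<Sum>i\<in>J. c i * f (v i))"
  using J v
proof (induction J rule: finite_induct)
  case empty
  have "\<forall>x\<in>X. \<forall>c. f (\<lambda>k. c * x k) = c * f x" using f unfolding linear_fun_def by blast
  from this[rule_format, OF Xpw_zero, of 0] show ?case by simp
next
  case (insert i J)
  have ci: "(\<lambda>n. c i * v i n) \<in> X" using insert Xpw_scale by auto
  have cJ: "(\<lambda>n. \<Sum>i\<in>J. c i * v i n) \<in> X"
    using Xpw_sum[of J "\<lambda>i n. c i * v i n"] insert Xpw_scale by auto
  have "f (\<lambda>n. c i * v i n + (\<Sum>i\<in>J. c i * v i n)) = c i * f (v i) + f (\<lambda>n. \<Sum>i\<in>J. c i * v i n)"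
    using f ci cJ insert.prems unfolding linear_fun_def by simp
  then show ?case using insert by simp
qed

lemma N_disjoint_comb_le:
  assumes p2: "2 \<le> p" and J: "finite J" "J \<noteq> {}" and v: "\<And>i. i \<in> J \<Longrightarrow> v i \<in> X"
    and d: "\<And>i j n. i \<in> J \<Longrightarrow> j \<in> J \<Longrightarrow> i \<noteq> j \<Longrightarrow> v i n = 0 \<or> v j n = 0"
    and c: "\<And>i. \<bar>c i\<bar> \<le> 1" and sp: "\<And>i. i \<in> J \<Longrightarrow> Sp (v i) \<le> 1"
    and s2: "\<And>i. i \<in> J \<Longrightarrow> S2 (v i) \<le> D\<^sup>2" and D: "1 \<le> D"
  shows "N (\<lambda>n. \<Sum>i\<in>J. c i * v i n) \<le> sqrt (card J) * D"
proof -
  define x where "x = (\<lambda>n. \<Sum>i\<in>J. c i * v i n)"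
  have cv: "i \<in> J \<Longrightarrow> (\<lambda>n. c i * v i n) \<in> X" for i by (rule Xpw_scale(1)[OF v])
  have dd: "c i * v i n = 0 \<or> c j * v j n = 0" if "i \<in> J" "j \<in> J" "i \<noteq> j" for i j n
    using d[OF that, of n] by auto
  have cv_le: "i \<in> J \<Longrightarrow> Sp (\<lambda>n. c i * v i n) \<le> 1 \<and> S2 (\<lambda>n. c i * v i n) \<le> D\<^sup>2" for i
    using Xpw_dominated(2,3)[OF v, of i "\<lambda>n. c i * v i n"] c[of i] sp s2
    by (fastforce simp: abs_mult mult_left_le_one_le)
  have m1: "1 \<le> sqrt (card J)" using J by (simp add: Suc_le_eq card_gt_0_iff)
  show ?thesis unfolding x_def[symmetric]
  proof (rule N_leI)
    show xX: "x \<in> X" unfolding x_def using Xpw_sum[OF J(1), of "\<lambda>i n. c i * v i n"] cv by blast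
    show "0 \<le> sqrt (card J) * D" using D by simp
    have "Sp x = (\<Sum>i\<in>J. Sp (\<lambda>n. c i * v i n))" unfolding x_def by (rule disjoint_sum_Sp_S2(1)[OF J(1) cv dd])
    also have "\<dots> \<le> (\<Sum>i\<in>J. 1)" by (rule sum_mono) (use cv_le in blast)
    also have "\<dots> = sqrt (card J) powr 2" by simp
    also have "\<dots> \<le> sqrt (card J) powr p" using m1 p2 by (intro powr_mono) auto
    also have "\<dots> \<le> (sqrt (card J) * D) powr p"
      using m1 D p_pos by (intro powr_mono2) (auto simp: mult_le_cancel_left1)
    finally show "Sp x \<le> (sqrt (card J) * D) powr p" .
    have "S2 x = (\<Sum>i\<in>J. S2 (\<lambda>n. c i * v i n))" unfolding x_def by (rule disjoint_sum_Sp_S2(2)[OF J(1) cv dd])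
    also have "\<dots> \<le> (\<Sum>i\<in>J. D\<^sup>2)" by (rule sum_mono) (use cv_le in blast)
    also have "\<dots> = (sqrt (card J) * D)\<^sup>2" by (simp add: power_mult_distrib)
    finally show "S2 x \<le> (sqrt (card J) * D)\<^sup>2" .
  qed
qed

text \<open>
  The norm of a sign sum of \<open>m\<close> such vectors grows like \<open>\<surd>m\<close>, while the values of the functional
  would add up linearly.
\<close>

lemma linear_fun_disjoint_tendsto_0:
  assumes p2: "2 \<le> p" and f: "linear_fun f"
    and K: "0 \<le> K" "\<And>x. x \<in> X \<Longrightarrow> \<bar>f x\<bar> \<le> K * N x"
    and v: "\<And>i. v i \<in> X" and d: "\<And>i j n. i \<noteq> j \<Longrightarrow> v i n = 0 \<or> v j n = 0"
    and sp: "\<And>i. Sp (v i) \<le> 1" and s2: "\<And>i. S2 (v i) \<le> D\<^sup>2" and D: "1 \<le> D"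
  shows "(\<lambda>i. f (v i)) \<longlonglongrightarrow> 0"
proof (rule ccontr)
  assume "\<not> ?thesis"
  then obtain e where e: "e > 0" "\<And>n0. \<exists>n\<ge>n0. \<not> \<bar>f (v n)\<bar> < e"
    unfolding LIMSEQ_iff by auto
  define I where "I = {n. e \<le> \<bar>f (v n)\<bar>}"
  have "\<forall>m. \<exists>n\<ge>m. n \<in> I" using e(2) by (force simp: I_def not_less)
  then have "infinite I" unfolding infinite_nat_iff_unbounded_le .
  obtain m :: nat where m: "(K * D / e)\<^sup>2 < real m" using reals_Archimedean2 by blast
  then have "m \<noteq> 0" by (metis of_nat_0 not_less zero_le_power2)
  obtain J where J: "finite J" "card J = m" "J \<subseteq> I"
    using infinite_arbitrarily_large[OF \<open>infinite I\<close>] by blast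
  then have "J \<noteq> {}" using \<open>m \<noteq> 0\<close> by auto
  define x where "x = (\<lambda>n. \<Sum>i\<in>J. sgn (f (v i)) * v i n)"
  have xX: "x \<in> X" unfolding x_def by (rule Xpw_sum[THEN conjunct1, OF J(1)]) (simp add: Xpw_scale(1)[OF v])
  have "real m * e \<le> (\<Sum>i\<in>J. \<bar>f (v i)\<bar>)"
    using sum_mono[of J "\<lambda>_. e" "\<lambda>i. \<bar>f (v i)\<bar>"] J(2,3) by (auto simp: I_def)
  also have "\<dots> = f x" unfolding x_def
    by (subst linear_fun_sum[OF f J(1) v]) (auto simp: abs_sgn mult.commute intro!: sum.cong)
  also have "\<dots> \<le> K * N x" using K(2)[OF xX] by simp
  also have "\<dots> \<le> K * (sqrt m * D)"
  proof (rule mult_left_mono)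
    show "N x \<le> sqrt m * D" unfolding x_def J(2)[symmetric]
      using N_disjoint_comb_le[OF p2 J(1) \<open>J \<noteq> {}\<close> v d _ sp s2 D, where c = "\<lambda>i. sgn (f (v i))"]
      by (simp add: abs_sgn_eq)
  qed (rule K(1))
  finally have "sqrt m * (sqrt m * e) \<le> sqrt m * (K * D)"
    by (simp add: ac_simps)
  then have "sqrt m * e \<le> K * D" using \<open>m \<noteq> 0\<close> mult_le_cancel_left_pos[of "sqrt m"] by simp
  then have "sqrt m \<le> K * D / e" using e(1) by (simp add: field_simps)
  then have "real m \<le> (K * D / e)\<^sup>2"
    using power_mono[of "sqrt m" "K * D / e" 2] by simp
  then show False using m by simp
qed

end

section \<open>Normalised blocks adapted to an operator with large diagonal\<close>

locale large_diagonal = Xpw_space +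
  fixes T :: "(nat \<Rightarrow> real) \<Rightarrow> nat \<Rightarrow> real" and \<delta> :: real
  assumes p_gt_2: "2 < p" and w_pos: "\<And>n. 0 < w n" and w_tendsto_0: "w \<longlonglongrightarrow> 0"
    and wpow_not_summable: "\<not> summable (\<lambda>n. w n powr (2 * p / (p - 2)))"
    and T_bop: "bop T" and delta_pos: "0 < \<delta>" and diag_ge: "\<And>n. \<delta> \<le> \<bar>T (unit_vec n) n\<bar>"
begin

definition "wpow n = w n powr (2 * p / (p - 2))"

lemma wpow_pos: "0 < wpow n" using w_pos[of n] by (simp add: wpow_def)

lemma wpow_mono: "w n \<le> w k \<Longrightarrow> wpow n \<le> wpow k"
  unfolding wpow_def using w_pos p_gt_2 by (intro powr_mono2) (auto intro: less_imp_le)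

lemma w_sq_eq_wpow: "(w n)\<^sup>2 = wpow n powr (1 - 2/p)"
proof -
  have "2 * p / (p - 2) * (1 - 2/p) = 2" using p_gt_2 by (simp add: field_simps)
  then have "wpow n powr (1 - 2/p) = w n powr 2" unfolding wpow_def using w_pos[of n] by (simp add: powr_powr)
  then show ?thesis using w_pos[of n] by simp
qed

lemma wpow_tail_sums_unbounded: "\<exists>l. B \<le> (\<Sum>i<l. wpow (s + i))"
proof (rule ccontr)
  assume "\<not> ?thesis"
  then have bounded: "(\<Sum>i<l. wpow (s + i)) \<le> B" for l by (metis linorder_le_cases)
  have "summable (\<lambda>i. wpow (i + s))"
  proof (rule bounded_imp_summable[of _ B])
    show "0 \<le> wpow (n + s)" for n using wpow_pos[of "n + s"] by simp
    show "(\<Sum>i\<le>n. wpow (i + s)) \<le> B" for n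
      using bounded[of "Suc n"] by (simp add: lessThan_Suc_atMost[symmetric] add.commute)
  qed
  then have "summable wpow" by simp
  then show False using wpow_not_summable by (simp add: wpow_def[abs_def])
qed

definition "blen k s = (LEAST l. wpow k \<le> (\<Sum>i<l. wpow (s + i)))"
definition "bmass k s = (\<Sum>i<blen k s. wpow (s + i))"

lemma wpow_le_bmass: "wpow k \<le> bmass k s"
proof -
  obtain l where "wpow k \<le> (\<Sum>i<l. wpow (s + i))" using wpow_tail_sums_unbounded by blast
  then show ?thesis unfolding bmass_def blen_def by (rule LeastI)
qed

lemma bmass_pos: "0 < bmass k s"
  using wpow_le_bmass[of k s] wpow_pos[of k] by simp

lemma blen_pos: "0 < blen k s"
  using bmass_pos[of k s] by (cases "blen k s") (auto simp: bmass_def)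

lemma bmass_le: "bmass k s \<le> wpow k + wpow (s + blen k s - 1)"
proof -
  obtain m where m: "blen k s = Suc m" using blen_pos gr0_implies_Suc by blast
  have "\<not> wpow k \<le> (\<Sum>i<m. wpow (s + i))" unfolding blen_def
    by (rule not_less_Least) (use m in \<open>simp add: blen_def\<close>)
  moreover have "bmass k s = (\<Sum>i<m. wpow (s + i)) + wpow (s + m)" by (simp add: bmass_def m)
  ultimately show ?thesis using m by simp
qed

text \<open>
  The block vector has coefficients \<open>\<plusminus>(u\<^sub>i/U)\<^bsup>1/p\<^esup>\<close> and the block functional
  \<open>\<plusminus>u\<^sub>i\<^bsup>1-1/p\<^esup> U\<^bsup>1/p-1\<^esup>\<close>, where \<open>u = wpow\<close> and \<open>U = bmass k s\<close>; so the functional pairs to one with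
  the vector, and by Jensen's inequality (weights \<open>u\<^sub>i/U\<close>) it is bounded by one with respect to
  both parts of the norm. The functional also carries the signs of the diagonal of \<open>T\<close>, which
  makes the diagonal of \<open>bmatrix k s\<close>, the matrix of \<open>T\<close> in these coordinates, nonnegative.
\<close>

definition "diag_sgn n = sgn (T (unit_vec n) n)"
definition "coef k s i = bmass k s powr (-1/p) * wpow (s + i) powr (1/p)"
definition "dual_coef k s i = diag_sgn (s + i) * bmass k s powr (1/p - 1) * wpow (s + i) powr (1 - 1/p)"
definition "bmatrix k s i j = dual_coef k s i * coef k s j * T (unit_vec (s + j)) (s + i)"
definition "bsign k s = greedy_sign (\<lambda>i j. bmatrix k s i j + bmatrix k s j i)"
definition "block_vec k s = (\<lambda>n. \<Sum>i<blen k s. (bsign k s i * coef k s i) * unit_vec (s + i) n)"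
definition "block_fun k s y = (\<Sum>i<blen k s. bsign k s i * dual_coef k s i * y (s + i))"
definition "block_diag k s = block_fun k s (T (block_vec k s))"

lemma abs_bsign: "\<bar>bsign k s i\<bar> = 1" by (simp add: bsign_def abs_greedy_sign)

lemma block_vec_Xpw: "block_vec k s \<in> X" unfolding block_vec_def by (rule unit_vec_comb) (auto simp: inj_on_def)

lemma block_vec_eq: "block_vec k s n = (if s \<le> n \<and> n < s + blen k s then bsign k s (n - s) * coef k s (n - s) else 0)"
proof -
  have "block_vec k s n = (\<Sum>i<blen k s. if i = n - s \<and> s \<le> n then bsign k s i * coef k s i else 0)"
    unfolding block_vec_def by (rule sum.cong) (auto simp: unit_vec_def)
  also have "\<dots> = (if s \<le> n \<and> n < s + blen k s then bsign k s (n - s) * coef k s (n - s) else 0)"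
    by (cases "s \<le> n") (auto simp: sum.delta' conj_commute)
  finally show ?thesis .
qed

lemma block_diag_eq_quadratic_form:
  "block_diag k s = (\<Sum>i<blen k s. \<Sum>j<blen k s. bsign k s i * bsign k s j * bmatrix k s i j)"
proof -
  have "T (block_vec k s) = (\<lambda>n. \<Sum>j<blen k s. (bsign k s j * coef k s j) * T (unit_vec (s + j)) n)"
    unfolding block_vec_def by (rule bop_sum[OF T_bop]) (auto intro: unit_vec_Xpw)
  then show ?thesis
    unfolding block_diag_def block_fun_def bmatrix_def by (simp add: sum_distrib_left algebra_simps)
qed

lemma bmatrix_diag: "bmatrix k s i i = wpow (s + i) / bmass k s * \<bar>T (unit_vec (s + i)) (s + i)\<bar>"
proof -
  have "bmass k s powr (1/p - 1) * bmass k s powr (-1/p) = bmass k s powr (-1)"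
    by (simp add: powr_add[symmetric])
  also have "\<dots> = 1 / bmass k s" using bmass_pos[of k s] by (simp add: powr_minus_divide)
  finally have "bmass k s powr (1/p - 1) * bmass k s powr (-1/p) = 1 / bmass k s" .
  moreover have "wpow (s + i) powr (1 - 1/p) * wpow (s + i) powr (1/p) = wpow (s + i)"
    using wpow_pos[of "s + i"] by (simp add: powr_add[symmetric])
  moreover have "diag_sgn (s + i) * T (unit_vec (s + i)) (s + i) = \<bar>T (unit_vec (s + i)) (s + i)\<bar>"
    unfolding diag_sgn_def by (simp add: sgn_mult_abs abs_sgn)
  ultimately show ?thesis
    unfolding bmatrix_def dual_coef_def coef_def by (simp add: algebra_simps)
qed

lemma block_diag_ge: "\<delta> \<le> block_diag k s"
proof -
  have "\<delta> = (\<Sum>i<blen k s. wpow (s + i) / bmass k s * \<delta>)"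
    using bmass_pos[of k s] by (simp add: sum_distrib_right[symmetric] sum_divide_distrib[symmetric] bmass_def)
  also have "\<dots> \<le> (\<Sum>i<blen k s. bmatrix k s i i)"
    unfolding bmatrix_diag using bmass_pos[of k s] wpow_pos diag_ge
    by (intro sum_mono mult_left_mono) (auto intro: less_imp_le)
  also have "\<dots> \<le> block_diag k s"
    unfolding block_diag_eq_quadratic_form bsign_def by (rule diag_le_greedy_quadratic_form)
  finally show ?thesis .
qed

lemma coef_nonneg: "0 \<le> coef k s i" by (simp add: coef_def)

lemma coef_powr: "coef k s i powr q = bmass k s powr (- q / p) * wpow (s + i) powr (q / p)"
  unfolding coef_def using bmass_pos[of k s] wpow_pos[of "s + i"] by (simp add: powr_mult powr_powr)

lemma Sp_block_vec: "Sp (block_vec k s) = 1"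
proof -
  have "Sp (block_vec k s) = (\<Sum>i<blen k s. \<bar>bsign k s i * coef k s i\<bar> powr p)"
    unfolding block_vec_def by (rule unit_vec_comb) (auto simp: inj_on_def)
  also have "\<dots> = (\<Sum>i<blen k s. wpow (s + i) / bmass k s)"
    using p_pos bmass_pos[of k s] wpow_pos
    by (simp add: abs_mult abs_bsign coef_nonneg coef_powr powr_minus_divide less_imp_le)
  also have "\<dots> = 1" using bmass_pos[of k s] by (simp add: sum_divide_distrib[symmetric] bmass_def)
  finally show ?thesis .
qed

lemma S2_block_vec: "S2 (block_vec k s) = bmass k s powr (1 - 2/p)"
proof -
  have "S2 (block_vec k s) = (\<Sum>i<blen k s. (bsign k s i * coef k s i * w (s + i))\<^sup>2)"
    unfolding block_vec_def by (rule unit_vec_comb) (auto simp: inj_on_def)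
  also have "\<dots> = (\<Sum>i<blen k s. bmass k s powr (-2/p) * wpow (s + i))"
  proof (rule sum.cong[OF refl])
    fix i
    have sq: "(bsign k s i * coef k s i)\<^sup>2 = bmass k s powr (-2/p) * wpow (s + i) powr (2/p)"
      using coef_nonneg[of k s i] abs_bsign[of k s i] coef_powr[of k s i 2]
      by (simp add: power_mult_distrib abs_square_eq_1)
    have "(bsign k s i * coef k s i * w (s + i))\<^sup>2 = (bsign k s i * coef k s i)\<^sup>2 * (w (s + i))\<^sup>2"
      by (simp add: power_mult_distrib)
    also have "\<dots> = bmass k s powr (-2/p) * (wpow (s + i) powr (2/p) * wpow (s + i) powr (1 - 2/p))"
      unfolding sq w_sq_eq_wpow by simp
    also have "\<dots> = bmass k s powr (-2/p) * wpow (s + i)"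
      using wpow_pos[of "s + i"] by (simp add: powr_add[symmetric])
    finally show "(bsign k s i * coef k s i * w (s + i))\<^sup>2 = bmass k s powr (-2/p) * wpow (s + i)" .
  qed
  also have "\<dots> = bmass k s powr (-2/p) * bmass k s powr 1"
    using bmass_pos[of k s] by (simp add: sum_distrib_left[symmetric] bmass_def)
  also have "\<dots> = bmass k s powr (1 - 2/p)" by (subst powr_add[symmetric]) simp
  finally show ?thesis .
qed

lemma abs_diag_sgn: "\<bar>diag_sgn n\<bar> = 1"
proof -
  have "T (unit_vec n) n \<noteq> 0" using diag_ge[of n] delta_pos by auto
  then show ?thesis by (simp add: diag_sgn_def abs_sgn_eq)
qed

lemma block_fun_convex_bound:
  assumes q: "1 \<le> q"
  shows "\<bar>block_fun k s y\<bar> powr q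
    \<le> bmass k s powr (q/p - 1) * (\<Sum>i<blen k s. wpow (s + i) powr (1 - q/p) * \<bar>y (s + i)\<bar> powr q)"
proof -
  define U where "U = bmass k s"
  define \<theta> where "\<theta> i = wpow (s + i) / U" for i
  define z where "z i = bsign k s i * diag_sgn (s + i) * U powr (1/p) * y (s + i) / wpow (s + i) powr (1/p)" for i
  have U: "0 < U" unfolding U_def by (rule bmass_pos)
  have "bsign k s i * dual_coef k s i * y (s + i) = \<theta> i * z i" for i
  proof -
    have "dual_coef k s i = diag_sgn (s + i) * (U powr (1/p) / U) * (wpow (s + i) / wpow (s + i) powr (1/p))"
      unfolding dual_coef_def U_def using bmass_pos[of k s] wpow_pos[of "s + i"] by (simp add: powr_diff)
    then show ?thesis unfolding \<theta>_def z_def using U wpow_pos[of "s + i"] by (simp add: field_simps)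
  qed
  then have "\<bar>block_fun k s y\<bar> powr q = \<bar>\<Sum>i<blen k s. \<theta> i * z i\<bar> powr q" by (simp add: block_fun_def)
  also have "\<dots> \<le> (\<Sum>i<blen k s. \<theta> i * \<bar>z i\<bar> powr q)"
  proof (rule abs_convex_comb_powr_le[OF _ _ q])
    show "{..<blen k s} \<noteq> {}" using blen_pos[of k s] by auto
    show "\<theta> i \<ge> 0" for i unfolding \<theta>_def using U wpow_pos[of "s + i"] by simp
    show "(\<Sum>i<blen k s. \<theta> i) = 1" unfolding \<theta>_def using U by (simp add: sum_divide_distrib[symmetric] bmass_def U_def)
  qed simp
  also have "\<dots> = (\<Sum>i<blen k s. U powr (q/p - 1) * (wpow (s + i) powr (1 - q/p) * \<bar>y (s + i)\<bar> powr q))"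
  proof (rule sum.cong[OF refl])
    fix i
    have u: "0 < wpow (s + i)" by (rule wpow_pos)
    have "\<bar>z i\<bar> powr q = U powr (q/p) * \<bar>y (s + i)\<bar> powr q / wpow (s + i) powr (q/p)"
      unfolding z_def using U u
      by (simp add: abs_mult abs_bsign abs_diag_sgn powr_divide powr_mult powr_powr)
    then show "\<theta> i * \<bar>z i\<bar> powr q = U powr (q/p - 1) * (wpow (s + i) powr (1 - q/p) * \<bar>y (s + i)\<bar> powr q)"
      unfolding \<theta>_def using U u by (simp add: powr_diff)
  qed
  finally show ?thesis by (simp add: sum_distrib_left U_def)
qed

lemma block_fun_powr_le: "\<bar>block_fun k s y\<bar> powr p \<le> (\<Sum>i<blen k s. \<bar>y (s + i)\<bar> powr p)"
  using block_fun_convex_bound[OF p_ge_1, of k s y] p_pos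
  by (simp add: less_imp_neq[OF wpow_pos, THEN not_sym] less_imp_neq[OF bmass_pos, THEN not_sym])

lemma block_fun_sq_le:
  "(block_fun k s y)\<^sup>2 \<le> bmass k s powr (2/p - 1) * (\<Sum>i<blen k s. (y (s + i) * w (s + i))\<^sup>2)"
  using block_fun_convex_bound[of 2 k s y]
  by (simp add: w_sq_eq_wpow power_mult_distrib mult.commute)

lemma w_sq_bmass_le: "(w k)\<^sup>2 * bmass k s powr (2/p - 1) \<le> 1"
proof -
  have "wpow k powr (1 - 2/p) \<le> bmass k s powr (1 - 2/p)"
    using wpow_le_bmass[of k s] wpow_pos[of k] p_gt_2 by (intro powr_mono2) auto
  moreover have "bmass k s powr (2/p - 1) = 1 / bmass k s powr (1 - 2/p)"
    using bmass_pos[of k s] by (simp add: powr_minus_divide[symmetric])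
  ultimately show ?thesis unfolding w_sq_eq_wpow using bmass_pos[of k s] by (simp add: divide_le_eq_1)
qed

lemma block_fun_add: "block_fun k s (\<lambda>n. x n + y n) = block_fun k s x + block_fun k s y"
  by (simp add: block_fun_def algebra_simps sum.distrib)

lemma block_fun_scale: "block_fun k s (\<lambda>n. c * x n) = c * block_fun k s x"
  by (simp add: block_fun_def sum_distrib_left algebra_simps)

lemma block_fun_powr_le_tail: assumes y: "y \<in> X"
  shows "\<bar>block_fun k s y\<bar> powr p \<le> (\<Sum>n. if n < s then 0 else \<bar>y n\<bar> powr p)"
  using block_fun_powr_le[of k s y] sum_shift_le_suminf_tail[OF XpwD(1)[OF y], where l="blen k s" and s=s] by simp

lemma abs_block_fun_le_N: assumes y: "y \<in> X" shows "\<bar>block_fun k s y\<bar> \<le> N y"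
proof -
  have "\<bar>block_fun k s y\<bar> powr p \<le> Sp y"
    using block_fun_powr_le_tail[OF y, of k s] suminf_tail_le[OF XpwD(1)[OF y], of s] unfolding Sp_def by simp
  then have "(\<bar>block_fun k s y\<bar> powr p) powr (1/p) \<le> Sp y powr (1/p)" using p_pos by (intro powr_mono2) auto
  then have "\<bar>block_fun k s y\<bar> \<le> Sp y powr (1/p)" using p_pos by (simp add: powr_powr)
  then show ?thesis unfolding N_eq by simp
qed

lemma block_fun_eventually_small: assumes y: "y \<in> X" and e: "0 < e"
  shows "eventually (\<lambda>s. \<bar>block_fun k s y\<bar> \<le> e) sequentially"
proof -
  have "eventually (\<lambda>s. (\<Sum>n. if n < s then 0 else \<bar>y n\<bar> powr p) < e powr p) sequentially"
    using order_tendstoD(2)[OF suminf_tail_tendsto_0[OF XpwD(1)[OF y]], of "e powr p"] e by simp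
  then show ?thesis
  proof (rule eventually_mono)
    fix s assume a: "(\<Sum>n. if n < s then 0 else \<bar>y n\<bar> powr p) < e powr p"
    show "\<bar>block_fun k s y\<bar> \<le> e"
    proof (rule ccontr)
      assume "\<not> \<bar>block_fun k s y\<bar> \<le> e"
      then have "e powr p \<le> \<bar>block_fun k s y\<bar> powr p" using e p_pos by (intro powr_mono2) auto
      then show False using a block_fun_powr_le_tail[OF y, of k s] by simp
    qed
  qed
qed

lemma block_vec_support: "block_vec k s n \<noteq> 0 \<Longrightarrow> s \<le> n \<and> n < s + blen k s"
  by (simp add: block_vec_eq split: if_splits)

lemma S2_block_vec_le:
  assumes "\<And>n. n \<ge> s \<Longrightarrow> w n \<le> w k"
  shows "S2 (block_vec k s) \<le> (2 * wpow k) powr (1 - 2/p)"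
proof -
  have "wpow (s + blen k s - 1) \<le> wpow k"
    using assms blen_pos[of k s] by (intro wpow_mono) simp
  then have "bmass k s \<le> 2 * wpow k" using bmass_le[of k s] by simp
  then have "bmass k s powr (1 - 2/p) \<le> (2 * wpow k) powr (1 - 2/p)"
    using bmass_pos[of k s] p_gt_2 by (intro powr_mono2) auto
  then show ?thesis by (simp add: S2_block_vec)
qed

end

section \<open>Choosing the blocks\<close>

context large_diagonal begin

definition "geom_vec k = ((1::real)/2)^k"

lemma geom_vec_Xpw: "geom_vec \<in> X"
proof -
  obtain W where W: "\<And>n. norm (w n) \<le> W" using convergent_imp_Bseq[OF convergentI[OF w_tendsto_0]] by (auto elim!: BseqE) blast
  have h: "((1::real)/2)^k \<le> 1" for k by (simp add: power_le_one)
  have a: "\<bar>geom_vec k\<bar> powr p \<le> (1/2)^k" for k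
    unfolding geom_vec_def using powr_le_one_le[of "(1/2)^k" p] p_ge_1 h[of k] by simp
  have b: "(geom_vec k * w k)\<^sup>2 \<le> W\<^sup>2 * (1/2)^k" for k
  proof -
    have "(geom_vec k * w k)\<^sup>2 = ((1/2)^k)^2 * (w k)\<^sup>2" by (simp add: geom_vec_def power_mult_distrib)
    also have "\<dots> \<le> (1/2)^k * W\<^sup>2"
    proof (rule mult_mono)
      show "(((1::real)/2)^k)\<^sup>2 \<le> (1/2)^k" using h[of k] by (simp add: power2_eq_square mult_left_le_one_le)
      show "(w k)\<^sup>2 \<le> W\<^sup>2" using W[of k] w_pos[of k] by (intro power_mono) auto
    qed auto
    finally show ?thesis by (simp add: mult.commute)
  qed
  have "summable (\<lambda>k. \<bar>geom_vec k\<bar> powr p)"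
    by (rule summable_comparison_test[OF _ summable_geometric[of "1/2"]]) (use a in auto)
  moreover have "summable (\<lambda>k. (geom_vec k * w k)\<^sup>2)"
    by (rule summable_comparison_test[OF _ summable_mult[OF summable_geometric[of "1/2"]]]) (use b in auto)
  ultimately show ?thesis by (simp add: Xpw_iff)
qed

text \<open>The off-diagonal entries \<open>b\<^sub>k\<^sup>*(T b\<^sub>j)\<close> will be at most \<open>tol k j\<close>; \<open>rho\<close> is chosen so that the
  resulting perturbation of the identity has norm at most \<open>1/2\<close>.\<close>

definition "rho = 1 / (4 * (N geom_vec + 1))"
definition "tol k j = \<delta> * rho * (1/2)^(k + j)"

lemma rho_pos: "0 < rho" using N_nonneg[of geom_vec] by (simp add: rho_def)
lemma tol_pos: "0 < tol k j" using rho_pos delta_pos by (simp add: tol_def)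

definition "block_chain k s0 = rec_nat s0 (\<lambda>_ s. s + blen k s)"

lemma block_chain_Suc: "block_chain k s0 (Suc i) = block_chain k s0 i + blen k (block_chain k s0 i)"
  by (simp add: block_chain_def)

lemma block_chain_ge: "s0 \<le> block_chain k s0 i"
  by (induction i) (auto simp: block_chain_Suc, simp add: block_chain_def)

lemma block_chain_Suc_le: "i < j \<Longrightarrow> block_chain k s0 (Suc i) \<le> block_chain k s0 j"
proof (induction j)
  case (Suc j)
  then show ?case by (cases "i = j") (auto simp: block_chain_Suc less_Suc_eq)
qed simp

lemma block_chain_disjoint:
  assumes "i \<noteq> j"
  shows "block_vec k (block_chain k s0 i) n = 0 \<or> block_vec k (block_chain k s0 j) n = 0"
proof (rule ccontr)
  assume "\<not> ?thesis"
  then have "n \<in> {block_chain k s0 i..<block_chain k s0 (Suc i)}" "n \<in> {block_chain k s0 j..<block_chain k s0 (Suc j)}"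
    using block_vec_support by (auto simp: block_chain_Suc)
  with assms block_chain_Suc_le[of i j k s0] block_chain_Suc_le[of j i k s0] show False
    by (cases "i < j") auto
qed

text \<open>Successive blocks of index \<open>k\<close> are disjoint, have \<open>\<ell>\<^sub>p\<close>-norm one and uniformly bounded weighted
  \<open>\<ell>\<^sub>2\<close>-norm, so any bounded functional becomes small along them.\<close>

lemma block_chain_eventually_small:
  assumes w: "\<And>n. s0 \<le> n \<Longrightarrow> w n \<le> w k" and f: "linear_fun f"
    and K: "0 \<le> K" "\<And>x. x \<in> X \<Longrightarrow> \<bar>f x\<bar> \<le> K * N x" and e: "0 < e"
  shows "eventually (\<lambda>i. \<bar>f (block_vec k (block_chain k s0 i))\<bar> \<le> e) sequentially"
proof -
  define D where "D = max 1 (sqrt ((2 * wpow k) powr (1 - 2/p)))"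
  have "S2 (block_vec k (block_chain k s0 i)) \<le> D\<^sup>2" for i
  proof -
    have "S2 (block_vec k (block_chain k s0 i)) \<le> (2 * wpow k) powr (1 - 2/p)"
      using w block_chain_ge[of s0 k i] by (intro S2_block_vec_le) auto
    also have "\<dots> = (sqrt ((2 * wpow k) powr (1 - 2/p)))\<^sup>2" by simp
    also have "\<dots> \<le> D\<^sup>2" unfolding D_def by (intro power_mono) auto
    finally show ?thesis .
  qed
  then have "(\<lambda>i. f (block_vec k (block_chain k s0 i))) \<longlonglongrightarrow> 0"
    using p_gt_2 by (intro linear_fun_disjoint_tendsto_0[OF _ f K block_vec_Xpw block_chain_disjoint])
      (auto simp: Sp_block_vec D_def)
  from order_tendstoD(2)[OF tendsto_rabs[OF this], of e] e show ?thesis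
    by (auto elim: eventually_mono)
qed

definition "admissible_start k prev s \<longleftrightarrow> (\<forall>j<k. prev j + blen j (prev j) \<le> s) \<and> (\<forall>n\<ge>s. w n \<le> w k)
   \<and> (\<forall>j<k. \<bar>block_fun k s (T (block_vec j (prev j)))\<bar> \<le> tol k j)
   \<and> (\<forall>j<k. \<bar>block_fun j (prev j) (T (block_vec k s))\<bar> \<le> tol k j)"

lemma admissible_start_cong:
  "(\<And>j. j < k \<Longrightarrow> prev j = prev' j) \<Longrightarrow> admissible_start k prev s = admissible_start k prev' s"
  unfolding admissible_start_def by auto

lemma admissible_start_exists: "\<exists>s. admissible_start k prev s"
proof -
  obtain K where K: "K \<ge> 0" "\<And>x. x \<in> X \<Longrightarrow> N (T x) \<le> K * N x" using bop_bound[OF T_bop] by blast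
  have "eventually (\<lambda>n. w n < w k) sequentially" by (rule order_tendstoD(2)[OF w_tendsto_0 w_pos])
  then have E1: "eventually (\<lambda>s. \<forall>n\<ge>s. w n \<le> w k) sequentially"
    unfolding eventually_sequentially by (meson less_imp_le order_trans)
  have E2: "eventually (\<lambda>s. \<forall>j\<in>{..<k}. prev j + blen j (prev j) \<le> s) sequentially"
    by (rule eventually_ball_finite) (auto intro: eventually_ge_at_top)
  have E3: "eventually (\<lambda>s. \<forall>j\<in>{..<k}. \<bar>block_fun k s (T (block_vec j (prev j)))\<bar> \<le> tol k j) sequentially"
    by (rule eventually_ball_finite) (auto intro!: block_fun_eventually_small tol_pos bopD(1)[OF T_bop] block_vec_Xpw)
  obtain s0 where s0: "\<And>s. s \<ge> s0 \<Longrightarrow> (\<forall>n\<ge>s. w n \<le> w k)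
      \<and> (\<forall>j\<in>{..<k}. prev j + blen j (prev j) \<le> s)
      \<and> (\<forall>j\<in>{..<k}. \<bar>block_fun k s (T (block_vec j (prev j)))\<bar> \<le> tol k j)"
    using eventually_conj[OF E1 eventually_conj[OF E2 E3]] by (auto simp: eventually_sequentially)
  have "eventually (\<lambda>i. \<forall>j\<in>{..<k}. \<bar>block_fun j (prev j) (T (block_vec k (block_chain k s0 i)))\<bar> \<le> tol k j)
      sequentially"
  proof (rule eventually_ball_finite[OF finite_lessThan], rule ballI)
    fix j
    have "linear_fun (\<lambda>x. block_fun j (prev j) (T x))" unfolding linear_fun_def
      using bopD(2,3)[OF T_bop] by (simp add: block_fun_add block_fun_scale)
    moreover have "\<bar>block_fun j (prev j) (T x)\<bar> \<le> K * N x" if "x \<in> X" for x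
      using abs_block_fun_le_N[OF bopD(1)[OF T_bop that], of j "prev j"] K(2)[OF that] by linarith
    ultimately show "eventually (\<lambda>i. \<bar>block_fun j (prev j) (T (block_vec k (block_chain k s0 i)))\<bar> \<le> tol k j)
        sequentially"
      using s0[OF order_refl] by (intro block_chain_eventually_small[where K = K] K(1) tol_pos) auto
  qed
  then obtain i where i: "\<forall>j\<in>{..<k}. \<bar>block_fun j (prev j) (T (block_vec k (block_chain k s0 i)))\<bar> \<le> tol k j"
    by (auto simp: eventually_sequentially)
  have "admissible_start k prev (block_chain k s0 i)"
    unfolding admissible_start_def using s0[OF block_chain_ge[of s0 k i]] i by auto
  then show ?thesis by blast
qed

text \<open>Course-of-values recursion: each start is chosen admissible after the list of all earlier ones.\<close>

primrec starts_upto :: "nat \<Rightarrow> nat list" where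
  "starts_upto 0 = [SOME s. admissible_start 0 (\<lambda>_. 0) s]"
| "starts_upto (Suc k) = starts_upto k @ [SOME s. admissible_start (Suc k) (\<lambda>j. starts_upto k ! j) s]"

definition "start k = starts_upto k ! k"

lemma length_starts_upto: "length (starts_upto k) = Suc k" by (induction k) auto

lemma nth_starts_upto: "j \<le> k \<Longrightarrow> starts_upto k ! j = start j"
proof (induction k)
  case 0 then show ?case by (simp add: start_def)
next
  case (Suc k)
  show ?case
  proof (cases "j = Suc k")
    case True then show ?thesis by (simp add: start_def)
  next
    case False
    then have "j \<le> k" using Suc by simp
    then show ?thesis using Suc length_starts_upto[of k] by (simp add: nth_append)
  qed
qed

lemma admissible_start_start: "admissible_start k start (start k)"
proof (cases k)
  case 0
  have "admissible_start 0 (\<lambda>_. 0) (SOME s. admissible_start 0 (\<lambda>_. 0) s)" by (rule someI_ex[OF admissible_start_exists])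
  then show ?thesis using 0 admissible_start_cong[of 0 "\<lambda>_. 0" start] by (simp add: start_def)
next
  case (Suc m)
  have "admissible_start (Suc m) (\<lambda>j. starts_upto m ! j) (SOME s. admissible_start (Suc m) (\<lambda>j. starts_upto m ! j) s)" by (rule someI_ex[OF admissible_start_exists])
  moreover have "admissible_start (Suc m) (\<lambda>j. starts_upto m ! j) s = admissible_start (Suc m) start s" for s
    by (rule admissible_start_cong) (simp add: nth_starts_upto)
  moreover have "start (Suc m) = (SOME s. admissible_start (Suc m) (\<lambda>j. starts_upto m ! j) s)"
    unfolding start_def using length_starts_upto[of m] by (simp add: nth_append)
  ultimately show ?thesis using Suc by simp
qed

lemma block_end_le_start: "j < k \<Longrightarrow> start j + blen j (start j) \<le> start k"
  using admissible_start_start[of k] unfolding admissible_start_def by blast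
lemma w_le_after_start: "n \<ge> start k \<Longrightarrow> w n \<le> w k"
  using admissible_start_start[of k] unfolding admissible_start_def by blast
lemma cross_term_small_below: "j < k \<Longrightarrow> \<bar>block_fun k (start k) (T (block_vec j (start j)))\<bar> \<le> tol k j"
  using admissible_start_start[of k] unfolding admissible_start_def by blast
lemma cross_term_small_above: "j < k \<Longrightarrow> \<bar>block_fun j (start j) (T (block_vec k (start k)))\<bar> \<le> tol k j"
  using admissible_start_start[of k] unfolding admissible_start_def by blast

lemma start_less_Suc: "start j < start (Suc j)"
  using block_end_le_start[of j "Suc j"] blen_pos[of j "start j"] by simp

lemma le_start: "k \<le> start k"
proof (induction k)
  case (Suc k) then show ?case using start_less_Suc[of k] by simp
qed simp

abbreviation "blk k \<equiv> block_vec k (start k)"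
abbreviation "blk_diag k \<equiv> block_diag k (start k)"

lemma blk_support: "blk k n \<noteq> 0 \<Longrightarrow> start k \<le> n \<and> n < start k + blen k (start k)"
  by (rule block_vec_support)

lemma blk_intervals_disjoint:
  assumes "j \<noteq> k"
  shows "{start j..<start j + blen j (start j)} \<inter> {start k..<start k + blen k (start k)} = {}"
  using assms block_end_le_start[of j k] block_end_le_start[of k j] by (cases "j < k") auto

lemma blk_disjoint: "j \<noteq> k \<Longrightarrow> blk j n = 0 \<or> blk k n = 0"
  using blk_support[of j n] blk_support[of k n] blk_intervals_disjoint[of j k]
  by (metis IntI atLeastLessThan_iff empty_iff)

lemma blk_zero_below: "n < k \<Longrightarrow> blk k n = 0"
  using blk_support[of k n] le_start[of k] by fastforce

lemma sum_blocks_le_suminf: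
  fixes g :: "nat \<Rightarrow> real"
  assumes g: "summable g" "\<And>n. 0 \<le> g n"
  shows "(\<Sum>k<M. \<Sum>i<blen k (start k). g (start k + i)) \<le> suminf g"
proof -
  define I where "I k = {start k..<start k + blen k (start k)}" for k
  have "(\<Sum>i<blen k (start k). g (start k + i)) = (\<Sum>n\<in>I k. g n)" for k
    unfolding I_def using sum.shift_bounds_nat_ivl[of g 0 "start k" "blen k (start k)"]
    by (simp add: atLeast0LessThan add.commute)
  then have "(\<Sum>k<M. \<Sum>i<blen k (start k). g (start k + i)) = (\<Sum>k<M. \<Sum>n\<in>I k. g n)" by simp
  also have "\<dots> = (\<Sum>n\<in>(\<Union>k<M. I k). g n)"
    by (rule sum.UNION_disjoint[symmetric]) (auto simp: I_def dest: blk_intervals_disjoint)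
  also have "\<dots> \<le> suminf g" by (rule sum_le_suminf[OF g(1)]) (auto simp: I_def g(2))
  finally show ?thesis .
qed

end

context large_diagonal begin

text \<open>As \<open>blk k\<close> vanishes below index \<open>k\<close>, this is the coordinatewise value of \<open>\<Sum>\<^sub>k x\<^sub>k blk k\<close>.\<close>

definition "block_embed x = (\<lambda>n. \<Sum>k\<le>n. x k * blk k n)"

lemma block_embed_truncate: "block_embed (\<lambda>k. if k < M then x k else 0) = (\<lambda>n. \<Sum>k<M. x k * blk k n)"
proof
  fix n
  define f where "f k = (if k < M then x k else 0) * blk k n" for k
  have "(\<Sum>k<Suc n. f k) = (\<Sum>k<max M (Suc n). f k)"
    by (rule sum.mono_neutral_left) (auto simp: f_def blk_zero_below)
  moreover have "(\<Sum>k<M. x k * blk k n) = (\<Sum>k<max M (Suc n). f k)"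
  proof -
    have "(\<Sum>k<M. x k * blk k n) = (\<Sum>k<M. f k)" by (rule sum.cong) (auto simp: f_def)
    also have "\<dots> = (\<Sum>k<max M (Suc n). f k)" by (rule sum.mono_neutral_left) (auto simp: f_def)
    finally show ?thesis .
  qed
  ultimately show "block_embed (\<lambda>k. if k < M then x k else 0) n = (\<Sum>k<M. x k * blk k n)"
    unfolding block_embed_def f_def by (simp add: lessThan_Suc_atMost)
qed

lemma block_embed_unit_vec: "block_embed (unit_vec j) = blk j"
proof
  fix n
  show "block_embed (unit_vec j) n = blk j n"
  proof (cases "j \<le> n")
    case True
    have "block_embed (unit_vec j) n = (\<Sum>k\<le>n. if k = j then blk k n else 0)"
      unfolding block_embed_def by (intro sum.cong) (auto simp: unit_vec_def)
    then show ?thesis using True by simp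
  next
    case False then show ?thesis by (simp add: block_embed_def unit_vec_def blk_zero_below)
  qed
qed

lemma S2_blk_le: "S2 (blk k) \<le> 2 * (w k)\<^sup>2"
proof -
  have "S2 (blk k) \<le> (2 * wpow k) powr (1 - 2/p)" by (rule S2_block_vec_le) (rule w_le_after_start)
  also have "\<dots> = 2 powr (1 - 2/p) * (w k)\<^sup>2" using wpow_pos[of k] by (simp add: powr_mult w_sq_eq_wpow)
  also have "\<dots> \<le> 2 * (w k)\<^sup>2"
  proof -
    have "2 powr (1 - 2/p) \<le> 2 powr 1" using p_gt_2 by (intro powr_mono) auto
    then show ?thesis by (intro mult_right_mono) auto
  qed
  finally show ?thesis .
qed

lemma block_embed_partial_sum:
  assumes x: "x \<in> X"
  shows "(\<lambda>n. \<Sum>k<M. x k * blk k n) \<in> X" "N (\<lambda>n. \<Sum>k<M. x k * blk k n) \<le> sqrt 2 * N x"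
proof -
  have fX: "(\<lambda>n. x k * blk k n) \<in> X" for k by (rule Xpw_scale(1)[OF block_vec_Xpw])
  show X1: "(\<lambda>n. \<Sum>k<M. x k * blk k n) \<in> X" using Xpw_sum[of "{..<M}" "\<lambda>k n. x k * blk k n"] fX by blast
  have d: "x i * blk i n = 0 \<or> x j * blk j n = 0" if "i \<noteq> j" for i j n using blk_disjoint[OF that, of n] by auto
  have sp: "Sp (\<lambda>n. \<Sum>k<M. x k * blk k n) \<le> Sp x"
  proof -
    have "Sp (\<lambda>n. \<Sum>k<M. x k * blk k n) = (\<Sum>k<M. Sp (\<lambda>n. x k * blk k n))"
      by (rule disjoint_sum_Sp_S2(1)) (use fX d in auto)
    also have "\<dots> = (\<Sum>k<M. \<bar>x k\<bar> powr p)" by (simp add: Sp_scale[OF block_vec_Xpw] Sp_block_vec)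
    also have "\<dots> \<le> Sp x" unfolding Sp_def by (rule sum_le_suminf[OF XpwD(1)[OF x]]) auto
    finally show ?thesis .
  qed
  have s2: "S2 (\<lambda>n. \<Sum>k<M. x k * blk k n) \<le> 2 * S2 x"
  proof -
    have "S2 (\<lambda>n. \<Sum>k<M. x k * blk k n) = (\<Sum>k<M. S2 (\<lambda>n. x k * blk k n))"
      by (rule disjoint_sum_Sp_S2(2)) (use fX d in auto)
    also have "\<dots> = (\<Sum>k<M. (x k)\<^sup>2 * S2 (blk k))" by (simp add: S2_scale[OF block_vec_Xpw])
    also have "\<dots> \<le> (\<Sum>k<M. 2 * (x k * w k)\<^sup>2)"
    proof (rule sum_mono)
      fix k
      have "(x k)\<^sup>2 * S2 (blk k) \<le> (x k)\<^sup>2 * (2 * (w k)\<^sup>2)" by (intro mult_left_mono S2_blk_le) auto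
      then show "(x k)\<^sup>2 * S2 (blk k) \<le> 2 * (x k * w k)\<^sup>2" by (simp add: power_mult_distrib)
    qed
    also have "\<dots> = 2 * (\<Sum>k<M. (x k * w k)\<^sup>2)" by (simp add: sum_distrib_left)
    also have "\<dots> \<le> 2 * S2 x" unfolding S2_def
      by (intro mult_left_mono sum_le_suminf[OF XpwD(2)[OF x]]) auto
    finally show ?thesis .
  qed
  show "N (\<lambda>n. \<Sum>k<M. x k * blk k n) \<le> sqrt 2 * N x"
  proof (rule N_leI[OF X1])
    have Nx: "N x \<le> sqrt 2 * N x" using N_nonneg[of x] by (simp add: mult_le_cancel_right1)
    show "0 \<le> sqrt 2 * N x" using N_nonneg[of x] by simp
    have "Sp x \<le> N x powr p" by (rule Sp_le_N[OF x])
    also have "\<dots> \<le> (sqrt 2 * N x) powr p" using Nx N_nonneg p_pos by (intro powr_mono2) auto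
    finally show "Sp (\<lambda>n. \<Sum>k<M. x k * blk k n) \<le> (sqrt 2 * N x) powr p" using sp by simp
    have "2 * S2 x \<le> 2 * (N x)\<^sup>2" using S2_le_N[OF x] by simp
    also have "\<dots> = (sqrt 2 * N x)\<^sup>2" by (simp add: power_mult_distrib)
    finally show "S2 (\<lambda>n. \<Sum>k<M. x k * blk k n) \<le> (sqrt 2 * N x)\<^sup>2" using s2 by simp
  qed
qed

lemma bop_block_embed: "bop block_embed"
proof (rule bopI[where K="sqrt 2"])
  fix x assume x: "x \<in> X"
  define xs where "xs M = (\<lambda>n. \<Sum>k<M. x k * blk k n)" for M
  have lim: "(\<lambda>M. xs M n) \<longlonglongrightarrow> block_embed x n" for n
  proof (rule tendsto_eventually)
    have "xs M n = block_embed x n" if "M \<ge> Suc n" for M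
    proof -
      have "xs M n = block_embed (\<lambda>k. if k < M then x k else 0) n" unfolding xs_def block_embed_truncate ..
      also have "\<dots> = block_embed x n" unfolding block_embed_def using that by (intro sum.cong) auto
      finally show ?thesis .
    qed
    then show "eventually (\<lambda>M. xs M n = block_embed x n) sequentially"
      unfolding eventually_sequentially by blast
  qed
  have "block_embed x \<in> X \<and> N (block_embed x) \<le> sqrt 2 * N x"
    using Xpw_pointwise_limit[of xs "sqrt 2 * N x" "block_embed x", OF _ _ lim] block_embed_partial_sum[OF x] unfolding xs_def by blast
  then show "block_embed x \<in> X" "N (block_embed x) \<le> sqrt 2 * N x" by auto
next
  fix x y :: "nat \<Rightarrow> real"
  show "block_embed (\<lambda>k. x k + y k) = (\<lambda>k. block_embed x k + block_embed y k)" by (simp add: block_embed_def algebra_simps sum.distrib)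
next
  fix x :: "nat \<Rightarrow> real" and a
  show "block_embed (\<lambda>k. a * x k) = (\<lambda>k. a * block_embed x k)" by (simp add: block_embed_def sum_distrib_left algebra_simps)
qed

definition "block_extract y = (\<lambda>k. block_fun k (start k) y / blk_diag k)"

lemma blk_diag_pos: "0 < blk_diag k" using block_diag_ge[of k "start k"] delta_pos by simp

lemma abs_block_extract_powr_le:
  "\<bar>block_extract y k\<bar> powr p \<le> (\<Sum>i<blen k (start k). \<bar>y (start k + i)\<bar> powr p) / \<delta> powr p"
proof -
  have "\<bar>block_extract y k\<bar> powr p = \<bar>block_fun k (start k) y\<bar> powr p / blk_diag k powr p"
    unfolding block_extract_def using blk_diag_pos[of k] by (simp add: powr_divide)
  also have "\<dots> \<le> \<bar>block_fun k (start k) y\<bar> powr p / \<delta> powr p"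
    using blk_diag_pos[of k] block_diag_ge[of k "start k"] delta_pos p_pos
    by (intro divide_left_mono powr_mono2) auto
  also have "\<dots> \<le> (\<Sum>i<blen k (start k). \<bar>y (start k + i)\<bar> powr p) / \<delta> powr p"
    using delta_pos by (intro divide_right_mono block_fun_powr_le) auto
  finally show ?thesis .
qed

lemma block_extract_sq_le:
  "(block_extract y k * w k)\<^sup>2 \<le> (\<Sum>i<blen k (start k). (y (start k + i) * w (start k + i))\<^sup>2) / \<delta>\<^sup>2"
proof -
  define Q where "Q = (\<Sum>i<blen k (start k). (y (start k + i) * w (start k + i))\<^sup>2)"
  have Q0: "0 \<le> Q" unfolding Q_def by (rule sum_nonneg) simp
  have "(block_extract y k * w k)\<^sup>2 = (block_fun k (start k) y)\<^sup>2 * (w k)\<^sup>2 / (blk_diag k)\<^sup>2"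
    unfolding block_extract_def by (simp add: power_mult_distrib power_divide)
  also have "\<dots> \<le> (bmass k (start k) powr (2/p - 1) * Q) * (w k)\<^sup>2 / (blk_diag k)\<^sup>2"
    unfolding Q_def by (intro divide_right_mono mult_right_mono block_fun_sq_le) auto
  also have "\<dots> = ((w k)\<^sup>2 * bmass k (start k) powr (2/p - 1)) * Q / (blk_diag k)\<^sup>2"
    by (simp add: algebra_simps)
  also have "\<dots> \<le> Q / (blk_diag k)\<^sup>2" using Q0 w_sq_bmass_le mult_right_mono[of _ 1 Q]
    by (intro divide_right_mono) auto
  also have "\<dots> \<le> Q / \<delta>\<^sup>2"
    using delta_pos block_diag_ge[of k "start k"] Q0 by (intro divide_left_mono power_mono) auto
  finally show ?thesis unfolding Q_def .
qed

lemma bop_block_extract: "bop block_extract"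
proof (rule bopI[where K="1/\<delta>"])
  fix y assume y: "y \<in> X"
  have "(\<Sum>k<M. \<bar>block_extract y k\<bar> powr p) \<le> (N y / \<delta>) powr p" for M
  proof -
    have "(\<Sum>k<M. \<bar>block_extract y k\<bar> powr p)
        \<le> (\<Sum>k<M. (\<Sum>i<blen k (start k). \<bar>y (start k + i)\<bar> powr p) / \<delta> powr p)"
      by (intro sum_mono abs_block_extract_powr_le)
    also have "\<dots> = (\<Sum>k<M. \<Sum>i<blen k (start k). \<bar>y (start k + i)\<bar> powr p) / \<delta> powr p"
      by (rule sum_divide_distrib[symmetric])
    also have "\<dots> \<le> N y powr p / \<delta> powr p"
      using delta_pos Sp_le_N[OF y] sum_blocks_le_suminf[OF XpwD(1)[OF y], of M]
      by (intro divide_right_mono) (auto simp: Sp_def)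
    finally show ?thesis using delta_pos N_nonneg[of y] by (simp add: powr_divide)
  qed
  moreover have "(\<Sum>k<M. (block_extract y k * w k)\<^sup>2) \<le> (N y / \<delta>)\<^sup>2" for M
  proof -
    have "(\<Sum>k<M. (block_extract y k * w k)\<^sup>2)
        \<le> (\<Sum>k<M. (\<Sum>i<blen k (start k). (y (start k + i) * w (start k + i))\<^sup>2) / \<delta>\<^sup>2)"
      by (intro sum_mono block_extract_sq_le)
    also have "\<dots> = (\<Sum>k<M. \<Sum>i<blen k (start k). (y (start k + i) * w (start k + i))\<^sup>2) / \<delta>\<^sup>2"
      by (rule sum_divide_distrib[symmetric])
    also have "\<dots> \<le> (N y)\<^sup>2 / \<delta>\<^sup>2"
      using delta_pos S2_le_N[OF y] sum_blocks_le_suminf[OF XpwD(2)[OF y], of M]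
      by (intro divide_right_mono) (auto simp: S2_def)
    finally show ?thesis by (simp add: power_divide)
  qed
  ultimately have "block_extract y \<in> X \<and> N (block_extract y) \<le> N y / \<delta>"
    using Xpw_bounded_partial_sums[of "N y / \<delta>"] delta_pos N_nonneg[of y] by auto
  then show "block_extract y \<in> X" "N (block_extract y) \<le> 1 / \<delta> * N y" by auto
next
  fix x y :: "nat \<Rightarrow> real"
  show "block_extract (\<lambda>k. x k + y k) = (\<lambda>k. block_extract x k + block_extract y k)"
    by (simp add: block_extract_def block_fun_add add_divide_distrib)
next
  fix x :: "nat \<Rightarrow> real" and a
  show "block_extract (\<lambda>k. a * x k) = (\<lambda>k. a * block_extract x k)"
    by (simp add: block_extract_def block_fun_scale)
qed

definition "defect x = (\<lambda>k. x k - block_extract (T (block_embed x)) k)"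

lemma bop_defect: "bop defect"
  unfolding defect_def
  by (rule bop_diff_op[OF bop_id bop_comp[OF bop_block_extract bop_comp[OF T_bop bop_block_embed]]])

lemma abs_defect_unit_vec_le: "\<bar>defect (unit_vec j) k\<bar> \<le> rho * (1/2)^j * geom_vec k"
proof (cases "k = j")
  case True
  have "defect (unit_vec j) j = 0"
    unfolding defect_def block_embed_unit_vec block_extract_def
    using blk_diag_pos[of j] by (simp add: block_diag_def unit_vec_def)
  then show ?thesis using True rho_pos by (simp add: geom_vec_def)
next
  case False
  have "\<bar>block_fun k (start k) (T (blk j))\<bar> \<le> tol k j"
    using False cross_term_small_below[of j k] cross_term_small_above[of k j]
    by (cases "j < k") (auto simp: tol_def add.commute)
  then have "\<bar>block_fun k (start k) (T (blk j))\<bar> / blk_diag k \<le> tol k j / \<delta>"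
  proof -
    have "\<bar>block_fun k (start k) (T (blk j))\<bar> / blk_diag k \<le> \<bar>block_fun k (start k) (T (blk j))\<bar> / \<delta>"
      using block_diag_ge[of k "start k"] delta_pos by (intro divide_left_mono) auto
    also have "\<dots> \<le> tol k j / \<delta>"
      using \<open>\<bar>block_fun k (start k) (T (blk j))\<bar> \<le> tol k j\<close> delta_pos by (intro divide_right_mono) auto
    finally show ?thesis .
  qed
  also have "\<dots> = rho * (1/2)^j * geom_vec k" using delta_pos by (simp add: tol_def geom_vec_def power_add)
  moreover have "defect (unit_vec j) k = - (block_fun k (start k) (T (blk j)) / blk_diag k)"
    unfolding defect_def block_embed_unit_vec block_extract_def using False by (simp add: unit_vec_def)
  ultimately show ?thesis using blk_diag_pos[of k] by simp
qed

lemma N_defect_unit_vec_le: "N (defect (unit_vec j)) \<le> rho * (1/2)^j * N geom_vec"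
proof -
  have "N (defect (unit_vec j)) \<le> N (\<lambda>k. (rho * (1/2)^j) * geom_vec k)"
    using abs_defect_unit_vec_le rho_pos
    by (intro Xpw_dominated(4)[OF Xpw_scale(1)[OF geom_vec_Xpw]]) (simp add: abs_mult geom_vec_def)
  also have "\<dots> = rho * (1/2)^j * N geom_vec" using Xpw_scale(2)[OF geom_vec_Xpw] rho_pos by simp
  finally show ?thesis .
qed

lemma N_defect_truncate_le:
  assumes x: "x \<in> X"
  shows "N (defect (\<lambda>k. if k < M then x k else 0)) \<le> (1/2) * N x"
proof -
  have trunc: "(\<lambda>k. if k < M then x k else 0) = (\<lambda>k. \<Sum>j<M. x j * unit_vec j k)"
    by (auto simp: unit_vec_def if_distrib cong: if_cong)
  have "N (defect (\<lambda>k. if k < M then x k else 0)) \<le> (\<Sum>j<M. N (\<lambda>k. x j * defect (unit_vec j) k))"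
    unfolding trunc bop_sum[OF bop_defect finite_lessThan unit_vec_Xpw]
    using Xpw_sum[of "{..<M}" "\<lambda>j k. x j * defect (unit_vec j) k"]
      Xpw_scale(1)[OF bopD(1)[OF bop_defect unit_vec_Xpw]] by simp
  also have "\<dots> = (\<Sum>j<M. \<bar>x j\<bar> * N (defect (unit_vec j)))"
    using Xpw_scale(2)[OF bopD(1)[OF bop_defect unit_vec_Xpw]] by simp
  also have "\<dots> \<le> (\<Sum>j<M. N x * (rho * (1/2)^j * N geom_vec))"
    by (intro sum_mono mult_mono abs_coord_le_N[OF x] N_defect_unit_vec_le) (auto simp: N_nonneg)
  also have "\<dots> = N x * rho * N geom_vec * (\<Sum>j<M. (1/2)^j)"
    by (simp add: sum_distrib_left algebra_simps)
  also have "\<dots> \<le> N x * rho * N geom_vec * 2"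
    using N_nonneg[of x] N_nonneg[of geom_vec] rho_pos by (intro mult_left_mono) (auto simp: sum_gp_strict)
  also have "\<dots> \<le> (1/2) * N x"
  proof -
    have "rho * N geom_vec * 2 \<le> 1/2" using N_nonneg[of geom_vec] by (simp add: rho_def field_simps)
    then show ?thesis using N_nonneg[of x] mult_left_mono[of "rho * N geom_vec * 2" "1/2" "N x"]
      by (simp add: algebra_simps)
  qed
  finally show ?thesis .
qed

lemma N_defect_le_half:
  assumes x: "x \<in> X"
  shows "N (defect x) \<le> (1/2) * N x"
proof -
  obtain K where K: "K \<ge> 0" "\<And>x. x \<in> X \<Longrightarrow> N (defect x) \<le> K * N x" using bop_bound[OF bop_defect] by blast
  have "N (defect x) \<le> (1/2) * N x + K * N (\<lambda>k. if k < M then 0 else x k)" for M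
  proof -
    define head where "head = (\<lambda>k. if k < M then x k else 0)"
    define tail where "tail = (\<lambda>k. if k < M then 0 else x k)"
    have head: "head \<in> X" and tail: "tail \<in> X" unfolding head_def tail_def using Xpw_truncate[OF x] by auto
    have "defect x = (\<lambda>k. defect head k + defect tail k)"
      using bopD(2)[OF bop_defect head tail] by (simp add: head_def tail_def if_distrib cong: if_cong)
    then have "N (defect x) \<le> N (defect head) + N (defect tail)"
      using Xpw_add(2)[OF bopD(1)[OF bop_defect head] bopD(1)[OF bop_defect tail]] by simp
    also have "\<dots> \<le> (1/2) * N x + K * N tail"
      using N_defect_truncate_le[OF x, of M] K(2)[OF tail] unfolding head_def by simp
    finally show ?thesis unfolding tail_def .
  qed
  moreover have "(\<lambda>M. (1/2) * N x + K * N (\<lambda>n. if n < M then 0 else x n)) \<longlonglongrightarrow> (1/2) * N x + K * 0"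
    by (intro tendsto_add tendsto_mult tendsto_const N_tail_tendsto_0[OF x])
  ultimately show ?thesis by (intro LIMSEQ_le_const[of _ "(1/2) * N x"]) auto
qed

lemma factorization: "\<exists>A B. bop A \<and> bop B \<and> (\<forall>x\<in>X. A (T (B x)) = x)"
proof (intro exI conjI ballI)
  let ?R = "neumann_series defect"
  have contraction: "bop defect" "\<And>x. x \<in> X \<Longrightarrow> N (defect x) \<le> 1/2 * N x" "0 \<le> (1/2 :: real)" "(1/2 :: real) < 1"
    using bop_defect N_defect_le_half by auto
  show "bop (\<lambda>y. ?R (block_extract y))"
    by (rule bop_comp[OF bop_neumann_series[OF contraction] bop_block_extract])
  show "bop block_embed" by (rule bop_block_embed)
  fix x assume "x \<in> X"
  have "block_extract (T (block_embed x)) = (\<lambda>k. x k - defect x k)" by (simp add: defect_def)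
  then show "?R (block_extract (T (block_embed x))) = x"
    using neumann_series_id_minus[OF contraction \<open>x \<in> X\<close>] by simp
qed

end

theorem mainTheorem3:
  fixes p :: real and w :: "nat \<Rightarrow> real"
  assumes "2 < p"
    and "\<And>n. w n > 0"
    and "w \<longlonglongrightarrow> 0"
    and "\<not> summable (\<lambda>n. w n powr (2 * p / (p - 2)))"
  shows "\<forall>T. bounded_op_Xpw p w T \<and> (INF n. \<bar>T (unit_vec n) n\<bar>) > 0 \<longrightarrow>
           (\<exists>A B. bounded_op_Xpw p w A \<and> bounded_op_Xpw p w B \<and>
                  (\<forall>x\<in>Xpw p w. A (T (B x)) = x))"
proof (intro allI impI)
  fix T assume T: "bounded_op_Xpw p w T \<and> (INF n. \<bar>T (unit_vec n) n\<bar>) > 0"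
  define \<delta> where "\<delta> = (INF n. \<bar>T (unit_vec n) n\<bar>)"
  have "\<delta> \<le> \<bar>T (unit_vec n) n\<bar>" for n
    unfolding \<delta>_def by (rule cINF_lower) (auto intro: bdd_belowI[of _ 0])
  then interpret large_diagonal p w T \<delta>
    by unfold_locales (use assms T \<delta>_def in auto)
  show "\<exists>A B. bounded_op_Xpw p w A \<and> bounded_op_Xpw p w B \<and> (\<forall>x\<in>Xpw p w. A (T (B x)) = x)"
    by (rule factorization)
qed

end
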